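(* For every $n\ge1$, $k\ge 1$ and $\lambda\vdash n$, $$s_\lambda\!\left[\frac{1}{(1-q_1)\cdots(1-q_k)}\right]=\frac{\sum_{T\in\mathrm{SYT}(\lambda)}\sum_{\vec{\sigma}\in S_n^{\times(k-1)}} q_1^{\mathrm{comaj}^1_T(\vec{\sigma})}\cdots q_k^{\mathrm{comaj}^k_T(\vec{\sigma})}}{(q_1;q_1)_n\cdots(q_k;q_k)_n}.$$
   Context: $s_\lambda[1/((1-q_1)\cdots(1-q_k))]$ denotes the Schur function $s_\lambda$ evaluated at the infinitely many variables given by all monomials $q_1^{a_1}\cdots q_k^{a_k}$, $(a_1,\dots,a_k)\in\mathbb{N}^k$ (a formal power series). $(q;t)_r=(1-q)(1-qt)\cdots(1-qt^{r-1})$. $\mathrm{SYT}(\lambda)$ is the set of standard Young tableaux of shape $\lambda$; $\epsilon$ is the identity of $S_n$. Definitions. $\mathbb{N}=\{0,1,2,\dots\}$. Sequences in $\mathbb{N}^r$ are compared lexicographically. For $R\subseteq\{1,\dots,n-1\}$ and distinct $a,b\in\{1,\dots,n\}$, write $a\sim_R b$ if all of $\min(a,b),\dots,\max(a,b)-1$ lie in $R$. For $S=(s^1,\dots,s^n)\in(\mathbb{N}^r)^n$ (if $r=0$, all $s^i$ are empty and equal) and $\sigma=\sigma_1\cdots\sigma_n\in S_n$, $\mathrm{Des}_{R,S}(\sigma)$ is the set of $i\in\{1,\dots,n-1\}$ such that either $s^{\sigma_i}>s^{\sigma_{i+1}}$, or $s^{\sigma_i}=s^{\sigma_{i+1}}$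 and either ($\sigma_{i+1}<\sigma_i$ and not $\sigma_{i+1}\sim_R\sigma_i$) or ($\sigma_{i+1}>\sigma_i$ and $\sigma_i\sim_R\sigma_{i+1}$). $\mathrm{Comaj}_{R,S}(\sigma)=\sum_{i\in\mathrm{Des}_{R,S}(\sigma)}(n-i)$. $Z_{R,\sigma}(S)=(z^1,\dots,z^n)\in(\mathbb{N}^{r+1})^n$, where $z^j$ is $s^j$ with a first coordinate $z^j_1$ prepended, $z^{\sigma_i}_1=\#\{j<i: j\in\mathrm{Des}_{R,S}(\sigma)\}$. For $\vec{\pi}=(\pi^1,\dots,\pi^{k-1})\in S_n^{\times(k-1)}$ set $\pi^k=\epsilon$, $Z^0=$ list of $n$ empty sequences, $Z^i=Z_{R,\pi^i}(Z^{i-1})$, and $\mathrm{comaj}^i_R(\vec{\pi})=\mathrm{Comaj}_{R,Z^{i-1}}(\pi^i)$ for $1\le i\le k$. For a standard tableau $T$ with $n$ cells, $\mathrm{des}(T)$ is the set of $i$ such that $i+1$ lies in a strictly lower row than $i$ (English notation), and $\mathrm{comaj}^i_T=\mathrm{comaj}^i_{\mathrm{des}(T)}$. *)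

theory Defs
  imports "HOL-Combinatorics.Permutations" "HOL-Computational_Algebra.Polynomial"
begin

definition is_partition :: "nat \<Rightarrow> nat list \<Rightarrow> bool" where
  "is_partition n la \<longleftrightarrow> sorted_wrt (\<ge>) la \<and> 0 \<notin> set la \<and> sum_list la = n"

definition cells :: "nat list \<Rightarrow> (nat \<times> nat) set" where
  "cells la = {(i, j). i < length la \<and> j < la ! i}"

text \<open>A standard tableau is a bijection from the cells onto {1..n}, increasing along rows
  and down columns; it is fixed to 0 outside the diagram so that SYT(lambda) is a finite set.\<close>
definition is_syt :: "nat \<Rightarrow> nat list \<Rightarrow> (nat \<times> nat \<Rightarrow> nat) \<Rightarrow> bool" where
  "is_syt n la T \<longleftrightarrow> bij_betw T (cells la) {1..n}
     \<and> (\<forall>c. c \<notin> cells la \<longrightarrow> T c = 0)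
     \<and> (\<forall>i j. (i, Suc j) \<in> cells la \<longrightarrow> T (i, j) < T (i, Suc j))
     \<and> (\<forall>i j. (Suc i, j) \<in> cells la \<longrightarrow> T (i, j) < T (Suc i, j))"

definition SYT :: "nat \<Rightarrow> nat list \<Rightarrow> (nat \<times> nat \<Rightarrow> nat) set" where
  "SYT n la = {T. is_syt n la T}"

definition syt_des :: "nat \<Rightarrow> nat list \<Rightarrow> (nat \<times> nat \<Rightarrow> nat) \<Rightarrow> nat set" where
  "syt_des n la T = {i \<in> {1..n-1}.
      fst (inv_into (cells la) T i) < fst (inv_into (cells la) T (Suc i))}"

definition is_ssyt :: "nat list \<Rightarrow> (nat \<times> nat \<Rightarrow> nat) \<Rightarrow> bool" where
  "is_ssyt la T \<longleftrightarrow> (\<forall>c. c \<notin> cells la \<longrightarrow> T c = 0)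
     \<and> (\<forall>i j. (i, Suc j) \<in> cells la \<longrightarrow> T (i, j) \<le> T (i, Suc j))
     \<and> (\<forall>i j. (Suc i, j) \<in> cells la \<longrightarrow> T (i, j) < T (Suc i, j))"

text \<open>Multivariate formal power series in q_1..q_k are represented by their coefficient
  functions: a coefficient for each exponent vector (a nat list of length k).\<close>
type_synonym mps = "nat list \<Rightarrow> int"

definition mps_mult :: "nat \<Rightarrow> mps \<Rightarrow> mps \<Rightarrow> mps" where
  "mps_mult k f g e =
     (\<Sum>a\<in>{a. length a = k \<and> list_all2 (\<le>) a e}. f a * g (map2 (-) e a))"

text \<open>s_lambda evaluated at the alphabet of all monomials q^a, a in N^k.  The variables
  x_0, x_1, ... of the Schur function are the monomials q^(enum m), where enum is an enumeration
  (bijection) of N^k; s_lambda = sum over SSYT T of prod_c x_(T c), so the coefficient of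
  q^e counts SSYT T with sum_c enum (T c) = e.\<close>
definition schur_at :: "nat list \<Rightarrow> nat \<Rightarrow> (nat \<Rightarrow> nat list) \<Rightarrow> mps" where
  "schur_at la k enum e = int (card {T. is_ssyt la T \<and>
      (\<forall>i<k. (\<Sum>c\<in>cells la. enum (T c) ! i) = e ! i)})"

definition qpoch :: "nat \<Rightarrow> int poly" where
  "qpoch n = (\<Prod>j\<in>{1..n}. 1 - monom 1 j)"

definition qpoch_denom :: "nat \<Rightarrow> nat \<Rightarrow> mps" where
  "qpoch_denom k n e = (\<Prod>i<k. coeff (qpoch n) (e ! i))"

definition lex_less :: "nat list \<Rightarrow> nat list \<Rightarrow> bool" where
  "lex_less xs ys \<longleftrightarrow> (xs, ys) \<in> lexord {(a, b). a < b}"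

definition sim :: "nat set \<Rightarrow> nat \<Rightarrow> nat \<Rightarrow> bool" where
  "sim R a b \<longleftrightarrow> a \<noteq> b \<and> (\<forall>j. min a b \<le> j \<and> j < max a b \<longrightarrow> j \<in> R)"

text \<open>sigma is a permutation of {1..n}, sigma_i = sigma i; S j is the sequence s^j.\<close>
definition Des :: "nat set \<Rightarrow> nat \<Rightarrow> (nat \<Rightarrow> nat list) \<Rightarrow> (nat \<Rightarrow> nat) \<Rightarrow> nat set" where
  "Des R n S \<sigma> = {i \<in> {1..n-1}.
      lex_less (S (\<sigma> (Suc i))) (S (\<sigma> i))
      \<or> (S (\<sigma> i) = S (\<sigma> (Suc i)) \<and>
          ((\<sigma> (Suc i) < \<sigma> i \<and> \<not> sim R (\<sigma> (Suc i)) (\<sigma> i))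
           \<or> (\<sigma> (Suc i) > \<sigma> i \<and> sim R (\<sigma> i) (\<sigma> (Suc i)))))}"

definition Comaj :: "nat set \<Rightarrow> nat \<Rightarrow> (nat \<Rightarrow> nat list) \<Rightarrow> (nat \<Rightarrow> nat) \<Rightarrow> nat" where
  "Comaj R n S \<sigma> = (\<Sum>i\<in>Des R n S \<sigma>. n - i)"

definition Zmap :: "nat set \<Rightarrow> nat \<Rightarrow> (nat \<Rightarrow> nat) \<Rightarrow> (nat \<Rightarrow> nat list) \<Rightarrow> (nat \<Rightarrow> nat list)" where
  "Zmap R n \<sigma> S j = card {j' \<in> Des R n S \<sigma>. j' < inv \<sigma> j} # S j"

text \<open>Z^0, Z^1, ... for a list of permutations ps (0-indexed: ps ! (i-1) is pi^i).\<close>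
fun Zseq :: "nat set \<Rightarrow> nat \<Rightarrow> (nat \<Rightarrow> nat) list \<Rightarrow> nat \<Rightarrow> (nat \<Rightarrow> nat list)" where
  "Zseq R n ps 0 = (\<lambda>_. [])"
| "Zseq R n ps (Suc i) = Zmap R n (ps ! i) (Zseq R n ps i)"

text \<open>(comaj^1_R(pi), ..., comaj^k_R(pi)) for pi = (pi^1..pi^(k-1)) given as a list,
  with pi^k = identity appended.\<close>
definition comaj_vec :: "nat set \<Rightarrow> nat \<Rightarrow> nat \<Rightarrow> (nat \<Rightarrow> nat) list \<Rightarrow> nat list" where
  "comaj_vec R n k ps =
     (let qs = ps @ [id] in map (\<lambda>i. Comaj R n (Zseq R n qs i) (qs ! i)) [0..<k])"

definition perm_tuples :: "nat \<Rightarrow> nat \<Rightarrow> (nat \<Rightarrow> nat) list set" where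
  "perm_tuples n m = {ps. length ps = m \<and> (\<forall>p\<in>set ps. p permutes {1..n})}"

definition numer :: "nat list \<Rightarrow> nat \<Rightarrow> nat \<Rightarrow> mps" where
  "numer la k n e = int (card {(T, ps). T \<in> SYT n la \<and> ps \<in> perm_tuples n (k - 1)
       \<and> comaj_vec (syt_des n la T) n k ps = e})"

end

(*
  Expand s_lambda over semistandard tableaux. Standardizing a tableau T gives a standard
  tableau S together with the sequence of its entries in the order of S; this sequence is
  weakly increasing and strictly increasing at the descents of S. Since Schur functions are
  symmetric (Bender-Knuth involutions), the monomials q^a may be enumerated in reverse
  lexicographic order, so such sequences become sequences v_1, ..., v_n in N^k that increase
  in reverse lexicographic order, strictly at des(S). Sorting the letters coordinate by
  coordinate, with ties broken by the keys of the previous maps Z, recovers a unique tuple of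
  permutations pi^1, ..., pi^(k-1), and the i-th coordinate sequence is compatible with
  Des_(R,Z^(i-1))(pi^i). Subtracting descent counts turns a compatible sequence into a sorted
  one and lowers its sum by comaj, and sorted sequences of length n have generating function
  1/(q;q)_n. Multiplying by the denominators leaves the numerator.
*)
theory Submission
  imports Defs "HOL-Computational_Algebra.Polynomial_FPS" "HOL-Library.List_Lexorder"
    "HOL-Library.Product_Lexorder"
begin

section \<open>Sorted lists and the generating function 1/(q;q)_n\<close>

definition sorted_lists :: "nat \<Rightarrow> nat \<Rightarrow> nat list set" where
  "sorted_lists n m = {xs. length xs = n \<and> sorted xs \<and> sum_list xs = m}"

lemma finite_sorted_lists: "finite (sorted_lists n m)"
proof -
  have "sorted_lists n m \<subseteq> {xs. set xs \<subseteq> {0..m} \<and> length xs = n}"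
    unfolding sorted_lists_def using member_le_sum_list by fastforce
  then show ?thesis
    using finite_lists_length_eq[of "{0..m}" n] finite_subset by auto
qed

lemma sorted_lists_0: "sorted_lists 0 m = (if m = 0 then {[]} else {})"
  unfolding sorted_lists_def by auto

lemma sum_list_map_Suc: "sum_list (map Suc xs) = sum_list xs + length xs"
  by (induction xs) auto

lemma sorted_lists_Suc:
  "sorted_lists (Suc n) m = Cons 0 ` sorted_lists n m \<union>
     (if Suc n \<le> m then map Suc ` sorted_lists (Suc n) (m - Suc n) else {})"
proof (intro set_eqI iffI)
  fix xs assume xs: "xs \<in> sorted_lists (Suc n) m"
  then obtain y ys where xs_eq: "xs = y # ys"
    unfolding sorted_lists_def by (cases xs) auto
  show "xs \<in> Cons 0 ` sorted_lists n m \<union>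
      (if Suc n \<le> m then map Suc ` sorted_lists (Suc n) (m - Suc n) else {})"
  proof (cases y)
    case 0
    then show ?thesis using xs xs_eq unfolding sorted_lists_def by auto
  next
    case (Suc z)
    have "\<forall>x\<in>set xs. x > 0" using xs xs_eq Suc unfolding sorted_lists_def by auto
    define zs where "zs = map (\<lambda>x. x - 1) xs"
    have xs_zs: "xs = map Suc zs"
      unfolding zs_def using \<open>\<forall>x\<in>set xs. x > 0\<close> by (induction xs) auto
    have "zs \<in> sorted_lists (Suc n) (m - Suc n)" "Suc n \<le> m"
      using xs sum_list_map_Suc[of zs] unfolding xs_zs sorted_lists_def by (auto simp: sorted_map)
    then show ?thesis using xs_zs by auto
  qed
next
  fix xs
  assume "xs \<in> Cons 0 ` sorted_lists n m \<union>
      (if Suc n \<le> m then map Suc ` sorted_lists (Suc n) (m - Suc n) else {})"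
  then show "xs \<in> sorted_lists (Suc n) m"
  proof
    assume "xs \<in> Cons 0 ` sorted_lists n m"
    then show ?thesis unfolding sorted_lists_def by auto
  next
    assume xs: "xs \<in> (if Suc n \<le> m then map Suc ` sorted_lists (Suc n) (m - Suc n) else {})"
    then have "Suc n \<le> m" by (auto split: if_splits)
    then obtain zs where zs: "zs \<in> sorted_lists (Suc n) (m - Suc n)" "xs = map Suc zs"
      using xs by auto
    have "sum_list (map Suc zs) = sum_list zs + length zs"
      by (rule sum_list_map_Suc)
    then show ?thesis
      using zs \<open>Suc n \<le> m\<close> unfolding sorted_lists_def by (auto simp: sorted_map)
  qed
qed

lemma card_sorted_lists_Suc:
  "card (sorted_lists (Suc n) m) = card (sorted_lists n m) +
     (if Suc n \<le> m then card (sorted_lists (Suc n) (m - Suc n)) else 0)"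
proof -
  have disj: "Cons 0 ` sorted_lists n m \<inter>
      (if Suc n \<le> m then map Suc ` sorted_lists (Suc n) (m - Suc n) else {}) = {}"
    by auto
  have "card (sorted_lists (Suc n) m) = card (Cons 0 ` sorted_lists n m) +
      card (if Suc n \<le> m then map Suc ` sorted_lists (Suc n) (m - Suc n) else {})"
    by (subst sorted_lists_Suc, rule card_Un_disjoint) (use finite_sorted_lists disj in simp_all)
  also have "card (Cons 0 ` sorted_lists n m) = card (sorted_lists n m)"
    by (rule card_image) auto
  also have "card (if Suc n \<le> m then map Suc ` sorted_lists (Suc n) (m - Suc n) else {}) =
      (if Suc n \<le> m then card (sorted_lists (Suc n) (m - Suc n)) else 0)"
    by (auto intro!: card_image simp: inj_on_def)
  finally show ?thesis .
qed

definition sorted_lists_fps :: "nat \<Rightarrow> int fps" where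
  "sorted_lists_fps n = Abs_fps (\<lambda>m. int (card (sorted_lists n m)))"

lemma qpoch_times_sorted_lists_fps: "fps_of_poly (qpoch n) * sorted_lists_fps n = 1"
proof (induction n)
  case 0
  show ?case
    by (intro fps_ext) (simp add: qpoch_def sorted_lists_fps_def sorted_lists_0)
next
  case (Suc n)
  have "sorted_lists_fps (Suc n) = sorted_lists_fps n + fps_X ^ Suc n * sorted_lists_fps (Suc n)"
  proof (rule fps_ext)
    fix m
    show "fps_nth (sorted_lists_fps (Suc n)) m =
        fps_nth (sorted_lists_fps n + fps_X ^ Suc n * sorted_lists_fps (Suc n)) m"
      unfolding fps_add_nth fps_X_power_mult_nth
      using card_sorted_lists_Suc[of n m] by (simp add: sorted_lists_fps_def)
  qed
  then have step: "(1 - fps_X ^ Suc n) * sorted_lists_fps (Suc n) = sorted_lists_fps n"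
    by (simp add: algebra_simps)
  have qpoch_Suc: "qpoch (Suc n) = qpoch n * (1 - monom 1 (Suc n))"
    unfolding qpoch_def by (simp add: prod.nat_ivl_Suc')
  show ?case
    unfolding qpoch_Suc fps_of_poly_mult fps_of_poly_diff fps_of_poly_monom'
    using Suc.IH step by (simp add: mult.assoc)
qed

lemma sorted_lists_qpoch_convolution:
  "(\<Sum>c=0..d. int (card (sorted_lists n c)) * coeff (qpoch n) (d - c)) = (if d = 0 then 1 else 0)"
proof -
  have "fps_nth (sorted_lists_fps n * fps_of_poly (qpoch n)) d = fps_nth (1::int fps) d"
    using qpoch_times_sorted_lists_fps[of n] by (simp add: mult.commute)
  then show ?thesis
    by (simp add: fps_mult_nth sorted_lists_fps_def)
qed

section \<open>Sequences compatible with a descent set\<close>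

definition compatible :: "nat \<Rightarrow> nat set \<Rightarrow> (nat \<Rightarrow> nat) \<Rightarrow> bool" where
  "compatible n D h \<longleftrightarrow> (\<forall>j\<in>{1..n-1}. h j \<le> h (Suc j) \<and> (j \<in> D \<longrightarrow> h j < h (Suc j)))"

definition compatible_seqs :: "nat \<Rightarrow> nat set \<Rightarrow> nat \<Rightarrow> (nat \<Rightarrow> nat) set" where
  "compatible_seqs n D m = {h \<in> {1..n} \<rightarrow>\<^sub>E UNIV. compatible n D h \<and> sum h {1..n} = m}"

definition comaj :: "nat \<Rightarrow> nat set \<Rightarrow> nat" where
  "comaj n D = (\<Sum>i\<in>D. n - i)"

lemma compatible_cong:
  assumes "\<And>j. j \<in> {1..n} \<Longrightarrow> h j = h' j"
  shows "compatible n D h \<longleftrightarrow> compatible n D h'"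
proof -
  have "h j = h' j \<and> h (Suc j) = h' (Suc j)" if "j \<in> {1..n-1}" for j
    using assms[of j] assms[of "Suc j"] that by auto
  then show ?thesis unfolding compatible_def by auto
qed

lemma compatible_mono:
  assumes "compatible n D h" "1 \<le> a" "a \<le> b" "b \<le> n"
  shows "h a \<le> h b"
  by (rule lift_Suc_mono_le_ivl[where N = "{1..n-1}"]) (use assms in \<open>auto simp: compatible_def\<close>)

lemma compatible_less:
  assumes "compatible n D h" "1 \<le> a" "a \<le> t" "t < b" "b \<le> n" "t \<in> D"
  shows "h a < h b"
proof -
  have "h a \<le> h t" using compatible_mono[OF assms(1)] assms by simp
  also have "h t < h (Suc t)" using assms unfolding compatible_def by auto
  also have "h (Suc t) \<le> h b" using compatible_mono[OF assms(1)] assms by simp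
  finally show ?thesis .
qed

lemma finite_compatible_seqs: "finite (compatible_seqs n D m)"
proof (rule finite_subset)
  show "compatible_seqs n D m \<subseteq> {1..n} \<rightarrow>\<^sub>E {0..m}"
    unfolding compatible_seqs_def
    using member_le_sum[of _ "{1..n}"] by fastforce
qed (simp add: finite_PiE)

definition count_below :: "nat set \<Rightarrow> nat \<Rightarrow> nat" where
  "count_below D j = card {i \<in> D. i < j}"

lemma count_below_Suc: "count_below D (Suc j) = count_below D j + (if j \<in> D then 1 else 0)"
proof -
  have "{i \<in> D. i < Suc j} = {i \<in> D. i < j} \<union> (if j \<in> D then {j} else {})"
    by (auto simp: less_Suc_eq)
  then show ?thesis
    unfolding count_below_def by (auto simp: card_insert_if)
qed

lemma sum_count_below:
  assumes "D \<subseteq> {1..n-1}"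
  shows "(\<Sum>j=1..n. count_below D j) = comaj n D"
proof -
  have "finite D" using assms finite_subset by blast
  have "(\<Sum>j=1..n. count_below D j) = (\<Sum>j=1..n. \<Sum>i\<in>D. if i < j then 1 else 0)"
    using \<open>finite D\<close> by (simp add: count_below_def sum.If_cases Int_def)
  also have "\<dots> = (\<Sum>i\<in>D. \<Sum>j=1..n. if i < j then 1 else 0)"
    by (rule sum.swap)
  also have "\<dots> = (\<Sum>i\<in>D. n - i)"
  proof (rule sum.cong[OF refl])
    fix i assume "i \<in> D"
    then have "{j \<in> {1..n}. i < j} = {Suc i..n}" using assms by auto
    then show "(\<Sum>j=1..n. if i < j then 1 else 0) = n - i"
      by (simp add: sum.If_cases Int_def)
  qed
  finally show ?thesis unfolding comaj_def .
qed

lemma count_below_le_compatible: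
  assumes "compatible n D h" "0 \<notin> D" "j \<in> {1..n}"
  shows "count_below D j \<le> h j"
  using assms(3)
proof (induction j)
  case (Suc j)
  show ?case
  proof (cases "j = 0")
    case True
    then have "{i \<in> D. i < Suc j} = {}" using assms(2) by auto
    then have "count_below D (Suc j) = 0" unfolding count_below_def by (simp only: card.empty)
    then show ?thesis by simp
  next
    case False
    then have "j \<in> {1..n-1}" using Suc.prems by auto
    then have "h j \<le> h (Suc j)" "j \<in> D \<longrightarrow> h j < h (Suc j)"
      using assms(1) unfolding compatible_def by auto
    moreover have "count_below D j \<le> h j" using Suc.IH Suc.prems False by auto
    ultimately show ?thesis using count_below_Suc[of D j] by auto
  qed
qed simp

lemma finite_below: "finite {i \<in> D. i < (j::nat)}"
  by (rule finite_subset[of _ "{..<j}"]) auto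

lemma count_below_mono: "i \<le> j \<Longrightarrow> count_below D i \<le> count_below D j"
  unfolding count_below_def by (rule card_mono[OF finite_below]) auto

lemma count_below_less:
  assumes "t \<in> D" "i \<le> t" "t < j"
  shows "count_below D i < count_below D j"
proof -
  have "{x \<in> D. x < i} \<subseteq> {x \<in> D. x < j}" "t \<in> {x \<in> D. x < j} - {x \<in> D. x < i}"
    using assms by auto
  then have "{x \<in> D. x < i} \<subset> {x \<in> D. x < j}" by blast
  then show ?thesis unfolding count_below_def by (rule psubset_card_mono[OF finite_below])
qed

text \<open>Subtracting the number of descents below each position turns a compatible sequence
  into a sorted one; the total drops by exactly the comajor index.\<close>

lemma compatible_shift_iff:
  "compatible n D (\<lambda>j. g j + count_below D j) \<longleftrightarrow> (\<forall>j\<in>{1..n-1}. g j \<le> g (Suc j))"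
proof -
  have "(g j + count_below D j \<le> g (Suc j) + count_below D (Suc j) \<and>
      (j \<in> D \<longrightarrow> g j + count_below D j < g (Suc j) + count_below D (Suc j))) \<longleftrightarrow>
      g j \<le> g (Suc j)" for j
    by (auto simp: count_below_Suc)
  then show ?thesis unfolding compatible_def by simp
qed

lemma sum_list_eq_sum_nth_pred: "length xs = n \<Longrightarrow> sum_list xs = (\<Sum>j=1..n. xs ! (j - 1))"
  by (simp add: sum_list_sum_nth sum.atLeast1_atMost_eq atLeast0LessThan)

lemma sorted_iff_nth_pred:
  assumes "length xs = n"
  shows "sorted xs \<longleftrightarrow> (\<forall>j\<in>{1..n-1}. xs ! (j - 1) \<le> xs ! j)"
proof -
  have "(\<forall>j\<in>{1..n-1}. xs ! (j - 1) \<le> xs ! j) \<longleftrightarrow> (\<forall>i. Suc i < n \<longrightarrow> xs ! i \<le> xs ! Suc i)"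
  proof
    assume H: "\<forall>j\<in>{1..n-1}. xs ! (j - 1) \<le> xs ! j"
    show "\<forall>i. Suc i < n \<longrightarrow> xs ! i \<le> xs ! Suc i"
      using H[rule_format, of "Suc _"] by auto
  next
    assume H: "\<forall>i. Suc i < n \<longrightarrow> xs ! i \<le> xs ! Suc i"
    show "\<forall>j\<in>{1..n-1}. xs ! (j - 1) \<le> xs ! j"
    proof
      fix j assume "j \<in> {1..n-1}"
      then show "xs ! (j - 1) \<le> xs ! j" using H[rule_format, of "j - 1"] by (cases j) auto
    qed
  qed
  then show ?thesis using assms by (simp add: sorted_iff_nth_Suc)
qed

lemma bij_betw_compatible_seqs_sorted_lists:
  assumes D: "D \<subseteq> {1..n-1}" and m: "comaj n D \<le> m"
  shows "bij_betw (\<lambda>h. map (\<lambda>j. h j - count_below D j) [1..<Suc n])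
           (compatible_seqs n D m) (sorted_lists n (m - comaj n D))"
proof (rule bij_betw_byWitness[where f' = "\<lambda>xs. \<lambda>j\<in>{1..n}. xs ! (j - 1) + count_below D j"])
  have D0: "0 \<notin> D" using D by auto
  have ge: "count_below D j \<le> h j" if "h \<in> compatible_seqs n D m" "j \<in> {1..n}" for h j
    using that count_below_le_compatible[of n D h j] D0 unfolding compatible_seqs_def by auto
  have sum_shift: "(\<Sum>j=1..n. g j + count_below D j) = sum g {1..n} + comaj n D" for g
    using sum_count_below[OF D] by (simp add: sum.distrib)
  show "\<forall>h\<in>compatible_seqs n D m.
      (\<lambda>j\<in>{1..n}. map (\<lambda>j. h j - count_below D j) [1..<Suc n] ! (j - 1) + count_below D j) = h"
    using ge by (auto simp: compatible_seqs_def fun_eq_iff PiE_def extensional_def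
        nth_append simp del: upt_Suc)
  show "\<forall>xs\<in>sorted_lists n (m - comaj n D).
      map (\<lambda>j. (\<lambda>j\<in>{1..n}. xs ! (j - 1) + count_below D j) j - count_below D j) [1..<Suc n] = xs"
    by (auto intro!: nth_equalityI simp: sorted_lists_def simp del: upt_Suc)
  show "(\<lambda>h. map (\<lambda>j. h j - count_below D j) [1..<Suc n]) ` compatible_seqs n D m
      \<subseteq> sorted_lists n (m - comaj n D)"
  proof safe
    fix h assume h: "h \<in> compatible_seqs n D m"
    define g where "g j = h j - count_below D j" for j
    have h_eq: "h j = g j + count_below D j" if "j \<in> {1..n}" for j
      using ge[OF h that] unfolding g_def by simp
    have "compatible n D (\<lambda>j. g j + count_below D j)"
      using h compatible_cong[of n h "\<lambda>j. g j + count_below D j"] h_eq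
      unfolding compatible_seqs_def by auto
    then have "\<forall>j\<in>{1..n-1}. g j \<le> g (Suc j)" by (simp add: compatible_shift_iff)
    moreover have "sum h {1..n} = (\<Sum>j=1..n. g j + count_below D j)"
      using h_eq by (rule sum.cong[OF refl])
    then have "sum g {1..n} + comaj n D = m"
      using h sum_shift[of g] unfolding compatible_seqs_def by simp
    moreover have "sum_list (map g [1..<Suc n]) = sum g {1..n}"
      by (metis atLeastLessThanSuc_atLeastAtMost set_upt sum_set_upt_conv_sum_list_nat)
    ultimately show "map g [1..<Suc n] \<in> sorted_lists n (m - comaj n D)"
      unfolding sorted_lists_def using sorted_iff_nth_pred[of "map g [1..<Suc n]" n]
      by (auto simp: nth_append simp del: upt_Suc)
  qed
  show "(\<lambda>xs. \<lambda>j\<in>{1..n}. xs ! (j - 1) + count_below D j) ` sorted_lists n (m - comaj n D)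
      \<subseteq> compatible_seqs n D m"
  proof safe
    fix xs assume xs: "xs \<in> sorted_lists n (m - comaj n D)"
    define h where "h = (\<lambda>j. xs ! (j - 1) + count_below D j)"
    have "compatible n D h"
      using xs sorted_iff_nth_pred[of xs n] unfolding h_def compatible_shift_iff sorted_lists_def
      by auto
    then have "compatible n D (restrict h {1..n})"
      using compatible_cong[of n "restrict h {1..n}" h] by simp
    moreover have "sum h {1..n} = m"
      using xs m sum_shift[of "\<lambda>j. xs ! (j - 1)"] sum_list_eq_sum_nth_pred[of xs n]
      unfolding h_def sorted_lists_def by simp
    ultimately show "restrict h {1..n} \<in> compatible_seqs n D m"
      unfolding compatible_seqs_def by simp
  qed
qed

lemma card_compatible_seqs:
  assumes "D \<subseteq> {1..n-1}"
  shows "card (compatible_seqs n D m) =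
    (if comaj n D \<le> m then card (sorted_lists n (m - comaj n D)) else 0)"
proof (cases "comaj n D \<le> m")
  case True
  then show ?thesis
    using bij_betw_same_card[OF bij_betw_compatible_seqs_sorted_lists[OF assms]] by simp
next
  case False
  have "compatible_seqs n D m = {}"
  proof (rule ccontr)
    assume "compatible_seqs n D m \<noteq> {}"
    then obtain h where h: "h \<in> compatible_seqs n D m" by blast
    have D0: "0 \<notin> D" using assms by auto
    have "(\<Sum>j=1..n. count_below D j) \<le> sum h {1..n}"
      using h count_below_le_compatible[of n D h, OF _ D0]
      by (intro sum_mono) (auto simp: compatible_seqs_def)
    then show False using False h sum_count_below[OF assms] unfolding compatible_seqs_def by simp
  qed
  then show ?thesis using False by simp
qed

definition key_rank :: "'a set \<Rightarrow> ('a \<Rightarrow> 'b::linorder) \<Rightarrow> 'a \<Rightarrow> nat" where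
  "key_rank A K a = Suc (card {b \<in> A. K b < K a})"

lemma key_rank_less_iff:
  assumes "finite A" "a \<in> A" "b \<in> A"
  shows "key_rank A K a < key_rank A K b \<longleftrightarrow> K a < K b"
proof
  assume "K a < K b"
  then have "{c \<in> A. K c < K a} \<subset> {c \<in> A. K c < K b}"
    using assms(2) by auto
  then show "key_rank A K a < key_rank A K b"
    unfolding key_rank_def using assms(1) by (simp add: psubset_card_mono)
next
  assume less: "key_rank A K a < key_rank A K b"
  show "K a < K b"
  proof (rule ccontr)
    assume "\<not> K a < K b"
    then have sub: "{c \<in> A. K c < K b} \<subseteq> {c \<in> A. K c < K a}" by auto
    show False
      using less card_mono[OF _ sub] assms(1) unfolding key_rank_def by simp
  qed
qed

lemma bij_betw_key_rank:
  assumes "finite A" "inj_on K A"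
  shows "bij_betw (key_rank A K) A {1..card A}"
proof -
  have inj: "inj_on (key_rank A K) A"
  proof (rule inj_onI, rule ccontr)
    fix a b assume ab: "a \<in> A" "b \<in> A" "key_rank A K a = key_rank A K b" "a \<noteq> b"
    then have "K a \<noteq> K b" using assms(2) by (auto dest: inj_onD)
    then show False
      using ab key_rank_less_iff[OF assms(1) ab(1,2), where K = K]
        key_rank_less_iff[OF assms(1) ab(2,1), where K = K]
      by (auto simp: neq_iff)
  qed
  have "key_rank A K a \<in> {1..card A}" if a: "a \<in> A" for a
  proof -
    have "card {b \<in> A. K b < K a} \<le> card (A - {a})"
      by (rule card_mono) (use assms(1) in auto)
    moreover have "card A > 0" using a assms(1) card_gt_0_iff by blast
    ultimately show ?thesis
      using a assms(1) unfolding key_rank_def by (auto simp: card_Diff_singleton)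
  qed
  then have "key_rank A K ` A = {1..card A}"
    using card_image[OF inj] by (intro card_subset_eq) auto
  then show ?thesis using inj unfolding bij_betw_def by simp
qed

lemma card_key_rank_le:
  assumes "finite A" "inj_on K A" "m \<le> card A"
  shows "card {a \<in> A. key_rank A K a \<le> m} = m"
proof -
  have "bij_betw (key_rank A K) {a \<in> A. key_rank A K a \<le> m} {r \<in> {1..card A}. r \<le> m}"
    by (rule bij_betw_Collect[OF bij_betw_key_rank[OF assms(1,2)]]) simp
  moreover have "{r \<in> {1..card A}. r \<le> m} = {1..m}" using assms(3) by auto
  ultimately show ?thesis using bij_betw_same_card by fastforce
qed

lemma lex_less_iff_less: "lex_less xs ys \<longleftrightarrow> xs < ys"
  unfolding lex_less_def list_less_def ..

lemma append_less_append_same_length: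
  "length xs = length ys \<Longrightarrow> xs @ us < ys @ vs \<longleftrightarrow> xs < ys \<or> (xs = ys \<and> us < vs)"
proof (induction xs arbitrary: ys)
  case (Cons x xs)
  then show ?case by (cases ys) auto
qed simp

definition sorts :: "nat \<Rightarrow> (nat \<Rightarrow> 'a::linorder) \<Rightarrow> (nat \<Rightarrow> nat) \<Rightarrow> bool" where
  "sorts n K \<sigma> \<longleftrightarrow> \<sigma> permutes {1..n} \<and> (\<forall>i\<in>{1..n-1}. K (\<sigma> i) < K (\<sigma> (Suc i)))"

lemma sorts_less_iff:
  assumes "sorts n K \<sigma>" "i \<in> {1..n}" "j \<in> {1..n}"
  shows "K (\<sigma> i) < K (\<sigma> j) \<longleftrightarrow> i < j"
proof -
  have less: "K (\<sigma> a) < K (\<sigma> b)" if "a \<in> {1..n}" "b \<in> {1..n}" "a < b" for a b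
    by (rule lift_Suc_mono_less_ivl[where f = "\<lambda>t. K (\<sigma> t)" and N = "{1..n-1}"])
      (use assms(1) that in \<open>auto simp: sorts_def\<close>)
  show ?thesis
    using less[OF assms(2,3)] less[OF assms(3,2)] by (cases i j rule: linorder_cases) auto
qed

lemma key_rank_sorts:
  assumes "sorts n K \<sigma>" "i \<in> {1..n}"
  shows "key_rank {1..n} K (\<sigma> i) = i"
proof -
  have \<sigma>: "\<sigma> permutes {1..n}" using assms(1) by (simp add: sorts_def)
  have "{b \<in> {1..n}. K b < K (\<sigma> i)} = \<sigma> ` {1..<i}"
  proof (intro set_eqI iffI)
    fix b assume b: "b \<in> {b \<in> {1..n}. K b < K (\<sigma> i)}"
    then have "inv \<sigma> b \<in> {1..n}" "\<sigma> (inv \<sigma> b) = b"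
      using permutes_in_image[OF permutes_inv[OF \<sigma>]] permutes_inverses(1)[OF \<sigma>] by auto
    then show "b \<in> \<sigma> ` {1..<i}"
      using b sorts_less_iff[OF assms(1) _ assms(2), of "inv \<sigma> b"] by force
  next
    fix b assume "b \<in> \<sigma> ` {1..<i}"
    then obtain j where j: "j \<in> {1..<i}" "b = \<sigma> j" by auto
    then have "j \<in> {1..n}" using assms(2) by auto
    then show "b \<in> {b \<in> {1..n}. K b < K (\<sigma> i)}"
      using j sorts_less_iff[OF assms(1) _ assms(2), of j] permutes_in_image[OF \<sigma>] by auto
  qed
  moreover have "card (\<sigma> ` {1..<i}) = i - 1"
    using card_image[OF inj_on_subset[OF permutes_inj[OF \<sigma>]]] by simp
  ultimately show ?thesis
    unfolding key_rank_def using assms(2) by simp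
qed

lemma sorts_unique:
  assumes "sorts n K \<sigma>" "sorts n K \<tau>"
  shows "\<sigma> = \<tau>"
proof
  fix i
  have \<sigma>: "\<sigma> permutes {1..n}" and \<tau>: "\<tau> permutes {1..n}"
    using assms by (auto simp: sorts_def)
  show "\<sigma> i = \<tau> i"
  proof (cases "i \<in> {1..n}")
    case True
    define j where "j = inv \<sigma> (\<tau> i)"
    have \<tau>_i: "\<tau> i = \<sigma> j"
      unfolding j_def using permutes_inverses(1)[OF \<sigma>] by simp
    have "j \<in> {1..n}"
      unfolding j_def using permutes_in_image[OF permutes_inv[OF \<sigma>]] permutes_in_image[OF \<tau>] True
      by simp
    then have "j = i"
      using key_rank_sorts[OF assms(1)] key_rank_sorts[OF assms(2) True] \<tau>_i by metis
    then show ?thesis using \<tau>_i by simp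
  next
    case False
    then show ?thesis using \<sigma> \<tau> by (simp add: permutes_not_in)
  qed
qed

lemma sorts_exists:
  assumes "inj_on K {1..n}"
  shows "\<exists>\<sigma>. sorts n K \<sigma>"
proof -
  define \<tau> where "\<tau> a = (if a \<in> {1..n} then key_rank {1..n} K a else a)" for a
  have "bij_betw \<tau> {1..n} {1..n} \<longleftrightarrow> bij_betw (key_rank {1..n} K) {1..n} {1..n}"
    by (rule bij_betw_cong) (simp add: \<tau>_def)
  then have "bij_betw \<tau> {1..n} {1..n}"
    using bij_betw_key_rank[OF _ assms] by simp
  then have \<tau>: "\<tau> permutes {1..n}"
    by (rule bij_imp_permutes) (auto simp: \<tau>_def)
  have "sorts n K (inv \<tau>)"
    unfolding sorts_def
  proof (intro conjI ballI)
    show "inv \<tau> permutes {1..n}" by (rule permutes_inv[OF \<tau>])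
    fix i assume "i \<in> {1..n-1}"
    then have i: "i \<in> {1..n}" "Suc i \<in> {1..n}" by auto
    then have in_range: "inv \<tau> i \<in> {1..n}" "inv \<tau> (Suc i) \<in> {1..n}"
      using permutes_in_image[OF permutes_inv[OF \<tau>]] by auto
    have "\<tau> (inv \<tau> i) < \<tau> (inv \<tau> (Suc i))"
      using permutes_inverses(1)[OF \<tau>] by simp
    then have "key_rank {1..n} K (inv \<tau> i) < key_rank {1..n} K (inv \<tau> (Suc i))"
      using in_range unfolding \<tau>_def[of "inv \<tau> i"] \<tau>_def[of "inv \<tau> (Suc i)"] by simp
    then show "K (inv \<tau> i) < K (inv \<tau> (Suc i))"
      using key_rank_less_iff[OF finite_atLeastAtMost in_range, where K = K] by simp
  qed
  then show ?thesis by blast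
qed

fun block_start :: "nat set \<Rightarrow> nat \<Rightarrow> nat" where
  "block_start R 0 = 0"
| "block_start R (Suc j) = (if j \<in> R then block_start R j else Suc j)"

lemma block_start_le: "block_start R a \<le> a"
  by (induction a) auto

lemma block_start_mono: "a \<le> b \<Longrightarrow> block_start R a \<le> block_start R b"
proof (induction b)
  case (Suc b)
  then show ?case using block_start_le[of R b] by (cases "a = Suc b") (auto simp: le_Suc_eq)
qed simp

lemma block_start_eq_iff:
  "a \<le> b \<Longrightarrow> block_start R a = block_start R b \<longleftrightarrow> (\<forall>j. a \<le> j \<and> j < b \<longrightarrow> j \<in> R)"
proof (induction b)
  case (Suc b)
  show ?case
  proof (cases "a = Suc b")
    case False
    then have ab: "a \<le> b" using Suc by simp
    show ?thesis
    proof (cases "b \<in> R")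
      case True
      then show ?thesis using Suc(1)[OF ab] by (auto simp: less_Suc_eq)
    next
      case False
      have "block_start R a \<le> b" using block_start_le[of R a] ab by simp
      then show ?thesis using False ab by auto
    qed
  qed auto
qed simp

lemma sim_iff_block_start: "a < b \<Longrightarrow> sim R a b \<longleftrightarrow> block_start R a = block_start R b"
  unfolding sim_def using block_start_eq_iff[of a b R] by auto

definition tiebreak :: "nat set \<Rightarrow> nat \<Rightarrow> nat \<Rightarrow> nat list" where
  "tiebreak R n a = [block_start R a, n - a]"

text \<open>With this tie-break (blocks of \<open>\<sim>\<^sub>R\<close> in increasing order, letters of one block in
  decreasing order) \<open>Des\<^sub>R\<^sub>,\<^sub>S\<close> becomes the set of ordinary descents of the keys.\<close>

definition des_key :: "nat set \<Rightarrow> nat \<Rightarrow> (nat \<Rightarrow> nat list) \<Rightarrow> nat \<Rightarrow> nat list" where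
  "des_key R n S a = S a @ tiebreak R n a"

lemma tiebreak_less_iff:
  assumes "a \<noteq> b" "a \<le> n" "b \<le> n"
  shows "tiebreak R n a < tiebreak R n b \<longleftrightarrow>
    (a < b \<and> \<not> sim R a b) \<or> (b < a \<and> sim R b a)"
proof (cases "a < b")
  case True
  then show ?thesis
    using block_start_mono[of a b R] sim_iff_block_start[OF True, of R] assms
    unfolding tiebreak_def by auto
next
  case False
  then have "b < a" using assms by simp
  then show ?thesis
    using block_start_mono[of b a R] sim_iff_block_start[OF \<open>b < a\<close>, of R] assms
    unfolding tiebreak_def by auto
qed

lemma inj_on_des_key:
  assumes "\<And>a. length (S a) = m"
  shows "inj_on (des_key R n S) {1..n}"
proof (rule inj_onI)
  fix a b assume ab: "a \<in> {1..n}" "b \<in> {1..n}" "des_key R n S a = des_key R n S b"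
  have "length (S a) = length (S b)" using assms by simp
  then have "tiebreak R n a = tiebreak R n b" using ab(3) unfolding des_key_def by simp
  then have "n - a = n - b" unfolding tiebreak_def by simp
  then show "a = b" using ab(1,2) by (simp add: atLeastAtMost_iff) linarith
qed

lemma Des_eq_key_descents:
  assumes \<sigma>: "\<sigma> permutes {1..n}" and len: "\<And>a. length (S a) = m"
  shows "Des R n S \<sigma> = {i \<in> {1..n-1}. des_key R n S (\<sigma> (Suc i)) < des_key R n S (\<sigma> i)}"
proof -
  have key_iff: "(S (\<sigma> (Suc i)) < S (\<sigma> i) \<or> (S (\<sigma> i) = S (\<sigma> (Suc i)) \<and>
        ((\<sigma> (Suc i) < \<sigma> i \<and> \<not> sim R (\<sigma> (Suc i)) (\<sigma> i)) \<or>
         (\<sigma> (Suc i) > \<sigma> i \<and> sim R (\<sigma> i) (\<sigma> (Suc i)))))) \<longleftrightarrow>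
      des_key R n S (\<sigma> (Suc i)) < des_key R n S (\<sigma> i)"
    if i: "i \<in> {1..n-1}" for i
  proof -
    have "Suc i \<in> {1..n}" "i \<in> {1..n}" using i by auto
    then have in_range: "\<sigma> (Suc i) \<in> {1..n}" "\<sigma> i \<in> {1..n}"
      using permutes_in_image[OF \<sigma>] by blast+
    have ne: "\<sigma> (Suc i) \<noteq> \<sigma> i"
      using permutes_inj[OF \<sigma>] by (metis injD n_not_Suc_n)
    have len_eq: "length (S (\<sigma> (Suc i))) = length (S (\<sigma> i))"
      by (simp add: len)
    have tb: "tiebreak R n (\<sigma> (Suc i)) < tiebreak R n (\<sigma> i) \<longleftrightarrow>
        (\<sigma> (Suc i) < \<sigma> i \<and> \<not> sim R (\<sigma> (Suc i)) (\<sigma> i)) \<or>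
        (\<sigma> i < \<sigma> (Suc i) \<and> sim R (\<sigma> i) (\<sigma> (Suc i)))"
      by (rule tiebreak_less_iff) (use ne in_range in auto)
    show ?thesis
      unfolding des_key_def append_less_append_same_length[OF len_eq] tb by auto
  qed
  show ?thesis
    unfolding Des_def lex_less_iff_less using key_iff by blast
qed

lemma des_key_less_if_not_Des:
  assumes \<sigma>: "\<sigma> permutes {1..n}" and len: "\<And>a. length (S a) = m"
    and t: "t \<in> {1..n-1}" "t \<notin> Des R n S \<sigma>"
  shows "des_key R n S (\<sigma> t) < des_key R n S (\<sigma> (Suc t))"
proof -
  have "\<not> des_key R n S (\<sigma> (Suc t)) < des_key R n S (\<sigma> t)"
    using t unfolding Des_eq_key_descents[OF \<sigma> len] by simp
  moreover have "des_key R n S (\<sigma> t) \<noteq> des_key R n S (\<sigma> (Suc t))"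
  proof
    have "t \<in> {1..n}" "Suc t \<in> {1..n}" using t by auto
    then have "\<sigma> t \<in> {1..n}" "\<sigma> (Suc t) \<in> {1..n}"
      using permutes_in_image[OF \<sigma>] by blast+
    moreover assume "des_key R n S (\<sigma> t) = des_key R n S (\<sigma> (Suc t))"
    ultimately have "\<sigma> t = \<sigma> (Suc t)"
      using inj_on_des_key[where S = S and R = R and n = n, OF len] by (auto dest: inj_onD)
    then show False using permutes_inj[OF \<sigma>] by (metis injD n_not_Suc_n)
  qed
  ultimately show ?thesis by simp
qed

lemma Zmap_eq: "Zmap R n \<sigma> S j = count_below (Des R n S \<sigma>) (inv \<sigma> j) # S j"
  unfolding Zmap_def count_below_def ..

text \<open>The new first coordinate counts descents of \<open>\<sigma>\<close>, so sorting the letters by their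
  new keys recovers \<open>\<sigma>\<close>.\<close>

lemma des_key_Zmap_less_iff:
  assumes \<sigma>: "\<sigma> permutes {1..n}" and len: "\<And>a. length (S a) = m"
    and a: "a \<in> {1..n}" and b: "b \<in> {1..n}"
  shows "des_key R n (Zmap R n \<sigma> S) a < des_key R n (Zmap R n \<sigma> S) b \<longleftrightarrow> inv \<sigma> a < inv \<sigma> b"
proof -
  define D where "D = Des R n S \<sigma>"
  define K where "K = des_key R n S"
  have key_Zmap: "des_key R n (Zmap R n \<sigma> S) x = count_below D (inv \<sigma> x) # K x" for x
    unfolding des_key_def Zmap_eq D_def K_def by simp
  have less: "count_below D i # K (\<sigma> i) < count_below D j # K (\<sigma> j)"
    if ij: "i \<in> {1..n}" "j \<in> {1..n}" "i < j" for i j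
  proof (cases "count_below D i < count_below D j")
    case False
    then have same: "count_below D i = count_below D j"
      using count_below_mono[of i j D] ij(3) by simp
    have "K (\<sigma> t) < K (\<sigma> (Suc t))" if t: "t \<in> {i..<j}" for t
    proof -
      have "t \<in> {1..n-1}" using t ij by auto
      moreover have "t \<notin> D" using count_below_less[of t D i j] same t by auto
      ultimately show ?thesis
        unfolding K_def D_def by (rule des_key_less_if_not_Des[OF \<sigma> len])
    qed
    then have "K (\<sigma> i) < K (\<sigma> j)"
      using lift_Suc_mono_less_ivl[where f = "\<lambda>t. K (\<sigma> t)" and N = "{i..<j}"] ij(3) by blast
    then show ?thesis using same by simp
  qed simp
  define i j where "i = inv \<sigma> a" and "j = inv \<sigma> b"
  have ij: "i \<in> {1..n}" "j \<in> {1..n}" "\<sigma> i = a" "\<sigma> j = b"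
    unfolding i_def j_def
    using a b permutes_in_image[OF permutes_inv[OF \<sigma>]] permutes_inverses(1)[OF \<sigma>] by auto
  show ?thesis
    unfolding key_Zmap i_def[symmetric] j_def[symmetric]
    using less[OF ij(1,2)] less[OF ij(2,1)] ij(3,4)
    by (cases i j rule: linorder_cases) (auto dest: order.asym)
qed

lemma length_Zseq: "length (Zseq R n qs i a) = i"
  by (induction i arbitrary: a) (auto simp: Zmap_def)

lemma Zseq_cong:
  "(\<And>j. j < i \<Longrightarrow> qs ! j = qs' ! j) \<Longrightarrow> Zseq R n qs i = Zseq R n qs' i"
  by (induction i) auto

text \<open>Level \<open>i\<close> of a sequence \<open>v\<close> of vectors is the permutation sorting the letters by
  coordinate \<open>i\<close> of \<open>v\<close>, ties broken by the keys of \<open>Z\<^sup>i\<close>; this recovers the tuple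
  \<open>\<pi>\<close> from a vector sequence.\<close>

definition level_key ::
    "nat set \<Rightarrow> nat \<Rightarrow> (nat \<Rightarrow> nat list) \<Rightarrow> (nat \<Rightarrow> nat) list \<Rightarrow> nat \<Rightarrow> nat \<Rightarrow> nat list" where
  "level_key R n v qs i a = v a ! i # des_key R n (Zseq R n qs i) a"

lemma compatible_Des_iff_sorts:
  assumes \<sigma>: "\<sigma> permutes {1..n}" and len: "\<And>a. length (S a) = m"
  shows "compatible n (Des R n S \<sigma>) (\<lambda>j. h (\<sigma> j)) \<longleftrightarrow> sorts n (\<lambda>a. h a # des_key R n S a) \<sigma>"
proof -
  have "(h (\<sigma> j) \<le> h (\<sigma> (Suc j)) \<and> (j \<in> Des R n S \<sigma> \<longrightarrow> h (\<sigma> j) < h (\<sigma> (Suc j)))) \<longleftrightarrow>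
        h (\<sigma> j) # des_key R n S (\<sigma> j) < h (\<sigma> (Suc j)) # des_key R n S (\<sigma> (Suc j))"
    if j: "j \<in> {1..n-1}" for j
  proof -
    have "j \<in> {1..n}" "Suc j \<in> {1..n}" using j by auto
    then have "\<sigma> j \<in> {1..n}" "\<sigma> (Suc j) \<in> {1..n}"
      using permutes_in_image[OF \<sigma>] by blast+
    moreover have "\<sigma> j \<noteq> \<sigma> (Suc j)"
      using permutes_inj[OF \<sigma>] by (metis injD n_not_Suc_n)
    ultimately have "des_key R n S (\<sigma> j) \<noteq> des_key R n S (\<sigma> (Suc j))"
      using inj_on_des_key[where S = S and R = R and n = n, OF len] by (auto dest: inj_onD)
    moreover have "j \<in> Des R n S \<sigma> \<longleftrightarrow> des_key R n S (\<sigma> (Suc j)) < des_key R n S (\<sigma> j)"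
      unfolding Des_eq_key_descents[OF \<sigma> len] using j by simp
    ultimately show ?thesis by (auto simp: neq_iff)
  qed
  then show ?thesis
    unfolding compatible_def sorts_def using \<sigma> by auto
qed

lemma des_key_Zseq_less_iff:
  assumes levels: "\<And>i'. i' < i \<Longrightarrow> sorts n (level_key R n v qs i') (qs ! i')"
    and "i \<le> k" and len: "\<forall>a\<in>{1..n}. length (v a) = k"
    and a: "a \<in> {1..n}" and b: "b \<in> {1..n}"
  shows "des_key R n (Zseq R n qs i) a < des_key R n (Zseq R n qs i) b \<longleftrightarrow>
    rev (take i (v a)) @ tiebreak R n a < rev (take i (v b)) @ tiebreak R n b"
  using assms(1,2) a b
proof (induction i arbitrary: a b)
  case 0
  then show ?case by (simp add: des_key_def)
next
  case (Suc i)
  define \<sigma> where "\<sigma> = qs ! i"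
  have sorted: "sorts n (level_key R n v qs i) \<sigma>"
    unfolding \<sigma>_def using Suc.prems(1) by simp
  then have \<sigma>: "\<sigma> permutes {1..n}" by (simp add: sorts_def)
  have inv_range: "inv \<sigma> a \<in> {1..n}" "inv \<sigma> b \<in> {1..n}"
    using Suc.prems(3,4) permutes_in_image[OF permutes_inv[OF \<sigma>]] by auto
  have "des_key R n (Zseq R n qs (Suc i)) a < des_key R n (Zseq R n qs (Suc i)) b
        \<longleftrightarrow> inv \<sigma> a < inv \<sigma> b"
    unfolding Zseq.simps \<sigma>_def[symmetric]
    by (rule des_key_Zmap_less_iff[OF \<sigma> length_Zseq Suc.prems(3,4)])
  also have "\<dots> \<longleftrightarrow> level_key R n v qs i a < level_key R n v qs i b"
    using sorts_less_iff[OF sorted inv_range] permutes_inverses(1)[OF \<sigma>] by simp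
  also have "\<dots> \<longleftrightarrow> v a ! i # rev (take i (v a)) @ tiebreak R n a <
      v b ! i # rev (take i (v b)) @ tiebreak R n b"
    unfolding level_key_def using Suc.IH[of a b] Suc.prems by simp
  also have "\<dots> \<longleftrightarrow>
      rev (take (Suc i) (v a)) @ tiebreak R n a < rev (take (Suc i) (v b)) @ tiebreak R n b"
    using Suc.prems(2-4) len by (simp add: take_Suc_conv_app_nth)
  finally show ?case .
qed

definition revlex_compatible :: "nat set \<Rightarrow> nat \<Rightarrow> (nat \<Rightarrow> nat list) \<Rightarrow> bool" where
  "revlex_compatible R n v \<longleftrightarrow>
     (\<forall>j\<in>{1..n-1}. rev (v j) < rev (v (Suc j)) \<or> (v j = v (Suc j) \<and> j \<notin> R))"

lemma last_level_eq_id_iff: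
  assumes "k \<ge> 1" and levels: "\<And>i. i < k \<Longrightarrow> sorts n (level_key R n v qs i) (qs ! i)"
    and len: "\<forall>a\<in>{1..n}. length (v a) = k"
  shows "qs ! (k - 1) = id \<longleftrightarrow> revlex_compatible R n v"
proof -
  define K where "K = level_key R n v qs (k - 1)"
  have sorted: "sorts n K (qs ! (k - 1))"
    unfolding K_def using levels assms(1) by simp
  have step: "K j < K (Suc j) \<longleftrightarrow> rev (v j) < rev (v (Suc j)) \<or> (v j = v (Suc j) \<and> j \<notin> R)"
    if j: "j \<in> {1..n-1}" for j
  proof -
    have jj: "j \<in> {1..n}" "Suc j \<in> {1..n}" using j by auto
    have lj: "length (v j) = k" "length (v (Suc j)) = k" using len jj by auto
    have rev_take: "v x ! (k - 1) # rev (take (k - 1) (v x)) = rev (v x)"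
      if "length (v x) = k" for x
    proof -
      have "take (k - 1) (v x) @ [v x ! (k - 1)] = v x"
        using that assms(1) take_Suc_conv_app_nth[of "k - 1" "v x"] by simp
      then have "rev (take (k - 1) (v x) @ [v x ! (k - 1)]) = rev (v x)" by (rule arg_cong)
      then show ?thesis by simp
    qed
    have "K j < K (Suc j) \<longleftrightarrow>
        v j ! (k - 1) # rev (take (k - 1) (v j)) @ tiebreak R n j <
        v (Suc j) ! (k - 1) # rev (take (k - 1) (v (Suc j))) @ tiebreak R n (Suc j)"
      unfolding K_def level_key_def
      using des_key_Zseq_less_iff[OF levels _ len jj, of "k - 1"] by simp
    also have "\<dots> \<longleftrightarrow> rev (v j) @ tiebreak R n j < rev (v (Suc j)) @ tiebreak R n (Suc j)"
      using rev_take[OF lj(1)] rev_take[OF lj(2)] by (metis append_Cons)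
    also have "\<dots> \<longleftrightarrow> rev (v j) < rev (v (Suc j)) \<or> (v j = v (Suc j) \<and> j \<notin> R)"
    proof -
      have "\<not> n - j < n - Suc j" by arith
      then show ?thesis
        using lj j block_start_le[of R j]
        by (simp add: append_less_append_same_length tiebreak_def)
    qed
    finally show ?thesis .
  qed
  have "qs ! (k - 1) = id \<longleftrightarrow> sorts n K id"
  proof
    assume "qs ! (k - 1) = id"
    then show "sorts n K id" using sorted by simp
  next
    assume "sorts n K id"
    then show "qs ! (k - 1) = id" using sorts_unique[OF sorted] by simp
  qed
  also have "\<dots> \<longleftrightarrow> revlex_compatible R n v"
    unfolding sorts_def revlex_compatible_def using step by (simp add: permutes_id)
  finally show ?thesis .
qed

lemma levels_exist:
  "\<exists>qs. length qs = i \<and> (\<forall>i'<i. sorts n (level_key R n v qs i') (qs ! i'))"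
proof (induction i)
  case 0
  show ?case by simp
next
  case (Suc i)
  then obtain qs where qs: "length qs = i" "\<forall>i'<i. sorts n (level_key R n v qs i') (qs ! i')"
    by blast
  have "inj_on (des_key R n (Zseq R n qs i)) {1..n}"
    by (rule inj_on_des_key) (rule length_Zseq)
  then have "inj_on (level_key R n v qs i) {1..n}"
    unfolding level_key_def inj_on_def by blast
  then obtain \<sigma> where \<sigma>: "sorts n (level_key R n v qs i) \<sigma>"
    using sorts_exists by blast
  have same_key: "level_key R n v (qs @ [\<sigma>]) i' = level_key R n v qs i'" if "i' \<le> i" for i'
    unfolding level_key_def using qs(1) that
    by (simp add: Zseq_cong[of i' "qs @ [\<sigma>]" qs] nth_append)
  have "sorts n (level_key R n v (qs @ [\<sigma>]) i') ((qs @ [\<sigma>]) ! i')" if "i' < Suc i" for i'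
    using qs \<sigma> same_key[of i'] that by (cases "i' = i") (auto simp: nth_append)
  then show ?case using qs(1) by (intro exI[of _ "qs @ [\<sigma>]"]) auto
qed

lemma levels_unique:
  assumes "length qs = k" "length qs' = k"
    and "\<And>i. i < k \<Longrightarrow> sorts n (level_key R n v qs i) (qs ! i)"
    and "\<And>i. i < k \<Longrightarrow> sorts n (level_key R n v qs' i) (qs' ! i)"
  shows "qs = qs'"
proof -
  have "\<forall>j<i. qs ! j = qs' ! j" if "i \<le> k" for i
    using that
  proof (induction i)
    case (Suc i)
    then have IH: "\<forall>j<i. qs ! j = qs' ! j" by simp
    then have "level_key R n v qs i = level_key R n v qs' i"
      unfolding level_key_def by (simp add: Zseq_cong[of i qs qs'])
    then have "qs ! i = qs' ! i"
      using assms(3)[of i] assms(4)[of i] Suc.prems sorts_unique by auto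
    then show ?case using IH less_Suc_eq by auto
  qed simp
  then show ?thesis using assms(1,2) by (intro nth_equalityI) auto
qed

lemma finite_perm_tuples: "finite (perm_tuples n m)"
proof (rule finite_subset)
  show "perm_tuples n m \<subseteq> {ps. set ps \<subseteq> {p. p permutes {1..n}} \<and> length ps = m}"
    unfolding perm_tuples_def by auto
  show "finite {ps. set ps \<subseteq> {p. p permutes {1..n}} \<and> length ps = m}"
    by (rule finite_lists_length_eq) (simp add: finite_permutations)
qed

lemma perm_tuples_append_id_nth_permutes:
  assumes "ps \<in> perm_tuples n (k - 1)" "i < k"
  shows "(ps @ [id]) ! i permutes {1..n}"
proof (cases "i < k - 1")
  case True
  then have "(ps @ [id]) ! i = ps ! i" "ps ! i \<in> set ps"
    using assms(1) unfolding perm_tuples_def by (auto simp: nth_append)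
  then show ?thesis using assms(1) unfolding perm_tuples_def by auto
next
  case False
  then have "(ps @ [id]) ! i = id"
    using assms unfolding perm_tuples_def by (simp add: nth_append)
  then show ?thesis by (simp add: permutes_id)
qed

lemma bij_betw_permuted_coordinates:
  fixes p :: "nat \<Rightarrow> nat \<Rightarrow> nat"
  assumes p: "\<And>i. i < k \<Longrightarrow> p i permutes {1..n}"
  shows "bij_betw (\<lambda>v. \<lambda>i\<in>{..<k}. \<lambda>j\<in>{1..n}. v (p i j) ! i)
    ({1..n} \<rightarrow>\<^sub>E {xs. length xs = k}) ({..<k} \<rightarrow>\<^sub>E ({1..n} \<rightarrow>\<^sub>E UNIV))"
proof (rule bij_betw_byWitness[where f' = "\<lambda>H. \<lambda>a\<in>{1..n}. map (\<lambda>i. H i (inv (p i) a)) [0..<k]"])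
  have p_in: "p i j \<in> {1..n}" if "i < k" "j \<in> {1..n}" for i j
    using permutes_in_image[OF p[OF that(1)]] that(2) by simp
  have p_inv_in: "inv (p i) a \<in> {1..n}" if "i < k" "a \<in> {1..n}" for i a
    using permutes_in_image[OF permutes_inv[OF p[OF that(1)]]] that(2) by simp
  show "\<forall>v\<in>{1..n} \<rightarrow>\<^sub>E {xs. length xs = k}.
      (\<lambda>a\<in>{1..n}. map (\<lambda>i. (\<lambda>i\<in>{..<k}. \<lambda>j\<in>{1..n}. v (p i j) ! i) i (inv (p i) a)) [0..<k]) = v"
  proof
    fix v assume v: "v \<in> {1..n} \<rightarrow>\<^sub>E {xs. length xs = k}"
    show "(\<lambda>a\<in>{1..n}. map (\<lambda>i. (\<lambda>i\<in>{..<k}. \<lambda>j\<in>{1..n}. v (p i j) ! i) i (inv (p i) a)) [0..<k]) = v"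
    proof
      fix a
      show "(\<lambda>a\<in>{1..n}. map (\<lambda>i. (\<lambda>i\<in>{..<k}. \<lambda>j\<in>{1..n}. v (p i j) ! i) i (inv (p i) a)) [0..<k]) a = v a"
      proof (cases "a \<in> {1..n}")
        case True
        have "map (\<lambda>i. (\<lambda>i\<in>{..<k}. \<lambda>j\<in>{1..n}. v (p i j) ! i) i (inv (p i) a)) [0..<k] =
            map (\<lambda>i. v a ! i) [0..<k]"
          using p_inv_in[OF _ True] permutes_inverses(1)[OF p] by (intro map_cong) auto
        also have "\<dots> = v a"
        proof -
          have "length (v a) = k" using v True by auto
          then show ?thesis by (metis map_nth)
        qed
        finally show ?thesis using True by simp
      next
        case False
        then show ?thesis by (simp add: PiE_arb[OF v False] del: atLeastAtMost_iff)
      qed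
    qed
  qed
  show "\<forall>H\<in>{..<k} \<rightarrow>\<^sub>E ({1..n} \<rightarrow>\<^sub>E UNIV). (\<lambda>i\<in>{..<k}. \<lambda>j\<in>{1..n}.
      (\<lambda>a\<in>{1..n}. map (\<lambda>i. H i (inv (p i) a)) [0..<k]) (p i j) ! i) = H"
  proof
    fix H assume H: "H \<in> {..<k} \<rightarrow>\<^sub>E ({1..n} \<rightarrow>\<^sub>E UNIV)"
    have "(\<lambda>j\<in>{1..n}. (\<lambda>a\<in>{1..n}. map (\<lambda>i. H i (inv (p i) a)) [0..<k]) (p i j) ! i) = H i"
      if i: "i < k" for i
    proof
      fix j
      have "H i \<in> {1..n} \<rightarrow>\<^sub>E UNIV" using H i by auto
      then show "(\<lambda>j\<in>{1..n}. (\<lambda>a\<in>{1..n}. map (\<lambda>i. H i (inv (p i) a)) [0..<k]) (p i j) ! i) j = H i j"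
        using p_in[OF i] i permutes_inverses(2)[OF p[OF i]]
        by (cases "j \<in> {1..n}") (auto simp: PiE_def extensional_def)
    qed
    then show "(\<lambda>i\<in>{..<k}. \<lambda>j\<in>{1..n}.
        (\<lambda>a\<in>{1..n}. map (\<lambda>i. H i (inv (p i) a)) [0..<k]) (p i j) ! i) = H"
      using H by (auto simp: fun_eq_iff PiE_def extensional_def)
  qed
qed auto

definition compatible_vecs :: "nat set \<Rightarrow> nat \<Rightarrow> nat \<Rightarrow> nat list \<Rightarrow> (nat \<Rightarrow> nat list) set" where
  "compatible_vecs R n k e = {v \<in> {1..n} \<rightarrow>\<^sub>E {xs. length xs = k}.
     revlex_compatible R n v \<and> (\<forall>i<k. (\<Sum>j=1..n. v j ! i) = e ! i)}"

definition level_vecs ::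
    "nat set \<Rightarrow> nat \<Rightarrow> nat \<Rightarrow> nat list \<Rightarrow> (nat \<Rightarrow> nat) list \<Rightarrow> (nat \<Rightarrow> nat list) set" where
  "level_vecs R n k e qs = {v \<in> {1..n} \<rightarrow>\<^sub>E {xs. length xs = k}.
     (\<forall>i<k. sorts n (level_key R n v qs i) (qs ! i)) \<and> (\<forall>i<k. (\<Sum>j=1..n. v j ! i) = e ! i)}"

lemma bij_betw_level_vecs:
  assumes qs: "\<And>i. i < k \<Longrightarrow> qs ! i permutes {1..n}"
  shows "bij_betw (\<lambda>v. \<lambda>i\<in>{..<k}. \<lambda>j\<in>{1..n}. v ((qs ! i) j) ! i) (level_vecs R n k e qs)
    (\<Pi>\<^sub>E i\<in>{..<k}. compatible_seqs n (Des R n (Zseq R n qs i) (qs ! i)) (e ! i))"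
proof -
  define \<Phi> where "\<Phi> v = (\<lambda>i\<in>{..<k}. \<lambda>j\<in>{1..n}. v ((qs ! i) j) ! i)" for v :: "nat \<Rightarrow> nat list"
  define C where "C i = compatible_seqs n (Des R n (Zseq R n qs i) (qs ! i)) (e ! i)" for i
  have level_iff: "\<Phi> v i \<in> C i \<longleftrightarrow>
      sorts n (level_key R n v qs i) (qs ! i) \<and> (\<Sum>j=1..n. v j ! i) = e ! i"
    if i: "i < k" for v i
  proof -
    have \<Phi>_i: "\<Phi> v i = (\<lambda>j\<in>{1..n}. v ((qs ! i) j) ! i)" using i by (simp add: \<Phi>_def)
    have "compatible n (Des R n (Zseq R n qs i) (qs ! i)) (\<Phi> v i) \<longleftrightarrow>
        compatible n (Des R n (Zseq R n qs i) (qs ! i)) (\<lambda>j. v ((qs ! i) j) ! i)"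
      by (rule compatible_cong) (simp add: \<Phi>_i)
    also have "\<dots> \<longleftrightarrow> sorts n (level_key R n v qs i) (qs ! i)"
      unfolding level_key_def by (rule compatible_Des_iff_sorts[OF qs[OF i] length_Zseq])
    finally have "compatible n (Des R n (Zseq R n qs i) (qs ! i)) (\<Phi> v i) \<longleftrightarrow>
        sorts n (level_key R n v qs i) (qs ! i)" .
    moreover have "sum (\<Phi> v i) {1..n} = (\<Sum>j=1..n. v j ! i)"
      unfolding \<Phi>_i using sum.reindex_bij_betw[OF permutes_imp_bij[OF qs[OF i]], of "\<lambda>a. v a ! i"]
      by simp
    ultimately show ?thesis
      unfolding C_def compatible_seqs_def \<Phi>_i by auto
  qed
  have "bij_betw \<Phi> {v \<in> {1..n} \<rightarrow>\<^sub>E {xs. length xs = k}.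
        (\<forall>i<k. sorts n (level_key R n v qs i) (qs ! i)) \<and> (\<forall>i<k. (\<Sum>j=1..n. v j ! i) = e ! i)}
      {H \<in> {..<k} \<rightarrow>\<^sub>E ({1..n} \<rightarrow>\<^sub>E UNIV). \<forall>i<k. H i \<in> C i}"
  proof (rule bij_betw_Collect)
    show "bij_betw \<Phi> ({1..n} \<rightarrow>\<^sub>E {xs. length xs = k}) ({..<k} \<rightarrow>\<^sub>E ({1..n} \<rightarrow>\<^sub>E UNIV))"
      unfolding \<Phi>_def by (rule bij_betw_permuted_coordinates[OF qs])
  qed (use level_iff in blast)
  moreover have "{H \<in> {..<k} \<rightarrow>\<^sub>E ({1..n} \<rightarrow>\<^sub>E UNIV). \<forall>i<k. H i \<in> C i} = (\<Pi>\<^sub>E i\<in>{..<k}. C i)"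
    unfolding C_def compatible_seqs_def by auto
  ultimately show ?thesis
    unfolding level_vecs_def \<Phi>_def C_def by simp
qed

lemma compatible_vecs_eq_UN_level_vecs:
  assumes k: "k \<ge> 1"
  shows "compatible_vecs R n k e = (\<Union>ps\<in>perm_tuples n (k - 1). level_vecs R n k e (ps @ [id]))"
proof (intro set_eqI iffI)
  fix v assume v: "v \<in> compatible_vecs R n k e"
  have len: "\<forall>a\<in>{1..n}. length (v a) = k" using v unfolding compatible_vecs_def by auto
  obtain qs where qs: "length qs = k" "\<And>i. i < k \<Longrightarrow> sorts n (level_key R n v qs i) (qs ! i)"
    using levels_exist by blast
  have "qs ! (k - 1) = id"
    using last_level_eq_id_iff[OF k qs(2) len] v unfolding compatible_vecs_def by auto
  moreover have "take (Suc (k - 1)) qs = take (k - 1) qs @ [qs ! (k - 1)]"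
    using qs(1) k by (intro take_Suc_conv_app_nth) simp
  moreover have "take (Suc (k - 1)) qs = qs" using qs(1) k by simp
  ultimately have qs_eq: "qs = take (k - 1) qs @ [id]" by simp
  have "take (k - 1) qs \<in> perm_tuples n (k - 1)"
    unfolding perm_tuples_def
  proof (intro CollectI conjI ballI)
    fix p assume "p \<in> set (take (k - 1) qs)"
    then obtain i where "i < k - 1" "p = qs ! i"
      using qs(1) by (auto simp: in_set_conv_nth)
    then show "p permutes {1..n}" using qs(2)[of i] by (simp add: sorts_def)
  qed (use qs(1) in simp)
  moreover have "v \<in> level_vecs R n k e (take (k - 1) qs @ [id])"
    using v qs(2) unfolding compatible_vecs_def level_vecs_def qs_eq[symmetric] by auto
  ultimately show "v \<in> (\<Union>ps\<in>perm_tuples n (k - 1). level_vecs R n k e (ps @ [id]))" by auto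
next
  fix v assume "v \<in> (\<Union>ps\<in>perm_tuples n (k - 1). level_vecs R n k e (ps @ [id]))"
  then obtain ps where ps: "ps \<in> perm_tuples n (k - 1)" and v: "v \<in> level_vecs R n k e (ps @ [id])"
    by auto
  have "(ps @ [id]) ! (k - 1) = id"
    using ps k unfolding perm_tuples_def by (simp add: nth_append)
  then have "revlex_compatible R n v"
    using last_level_eq_id_iff[OF k, where R = R and n = n and v = v and qs = "ps @ [id]"] v
      unfolding level_vecs_def by auto
  then show "v \<in> compatible_vecs R n k e"
    using v unfolding level_vecs_def compatible_vecs_def by auto
qed

lemma level_vecs_disjoint:
  assumes "ps \<in> perm_tuples n (k - 1)" "ps' \<in> perm_tuples n (k - 1)" "ps \<noteq> ps'" "k \<ge> 1"
  shows "level_vecs R n k e (ps @ [id]) \<inter> level_vecs R n k e (ps' @ [id]) = {}"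
proof (rule ccontr)
  assume "level_vecs R n k e (ps @ [id]) \<inter> level_vecs R n k e (ps' @ [id]) \<noteq> {}"
  then obtain v where "v \<in> level_vecs R n k e (ps @ [id])" "v \<in> level_vecs R n k e (ps' @ [id])"
    by auto
  then have "ps @ [id] = ps' @ [id]"
    using assms by (intro levels_unique[of _ k _ n R v]) (auto simp: perm_tuples_def level_vecs_def)
  then show False using assms(3) by simp
qed

text \<open>The coefficient of \<open>q\<^sup>e\<close> in \<open>q\<^sup>c / ((q\<^sub>1;q\<^sub>1)\<^sub>n \<cdots> (q\<^sub>k;q\<^sub>k)\<^sub>n)\<close>.\<close>

definition inv_qpoch_coeff :: "nat \<Rightarrow> nat \<Rightarrow> nat list \<Rightarrow> nat list \<Rightarrow> nat" where
  "inv_qpoch_coeff n k c e =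
     (\<Prod>i<k. if c ! i \<le> e ! i then card (sorted_lists n (e ! i - c ! i)) else 0)"

lemma comaj_vec_nth:
  "i < k \<Longrightarrow> comaj_vec R n k ps ! i = comaj n (Des R n (Zseq R n (ps @ [id]) i) ((ps @ [id]) ! i))"
  unfolding comaj_vec_def Comaj_def comaj_def Let_def by simp

lemma length_comaj_vec: "length (comaj_vec R n k ps) = k"
  unfolding comaj_vec_def Let_def by simp

theorem card_compatible_vecs:
  assumes k: "k \<ge> 1"
  shows "finite (compatible_vecs R n k e)"
    and "card (compatible_vecs R n k e) =
      (\<Sum>ps\<in>perm_tuples n (k - 1). inv_qpoch_coeff n k (comaj_vec R n k ps) e)"
proof -
  have bij: "bij_betw (\<lambda>v. \<lambda>i\<in>{..<k}. \<lambda>j\<in>{1..n}. v (((ps @ [id]) ! i) j) ! i)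
      (level_vecs R n k e (ps @ [id]))
      (\<Pi>\<^sub>E i\<in>{..<k}. compatible_seqs n (Des R n (Zseq R n (ps @ [id]) i) ((ps @ [id]) ! i)) (e ! i))"
    if "ps \<in> perm_tuples n (k - 1)" for ps
    by (rule bij_betw_level_vecs[OF perm_tuples_append_id_nth_permutes[OF that]])
  have fin: "finite (level_vecs R n k e (ps @ [id]))" if "ps \<in> perm_tuples n (k - 1)" for ps
    using bij_betw_finite[OF bij[OF that]] by (simp add: finite_PiE finite_compatible_seqs)
  show "finite (compatible_vecs R n k e)"
    unfolding compatible_vecs_eq_UN_level_vecs[OF k] using fin finite_perm_tuples by blast
  have "card (compatible_vecs R n k e) =
      (\<Sum>ps\<in>perm_tuples n (k - 1). card (level_vecs R n k e (ps @ [id])))"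
    unfolding compatible_vecs_eq_UN_level_vecs[OF k]
    by (rule card_UN_disjoint) (use finite_perm_tuples fin level_vecs_disjoint k in auto)
  also have "\<dots> = (\<Sum>ps\<in>perm_tuples n (k - 1). inv_qpoch_coeff n k (comaj_vec R n k ps) e)"
  proof (rule sum.cong[OF refl])
    fix ps assume ps: "ps \<in> perm_tuples n (k - 1)"
    have Des_sub: "Des R n S \<sigma> \<subseteq> {1..n-1}" for S \<sigma>
      unfolding Des_def by auto
    show "card (level_vecs R n k e (ps @ [id])) = inv_qpoch_coeff n k (comaj_vec R n k ps) e"
      unfolding bij_betw_same_card[OF bij[OF ps]] inv_qpoch_coeff_def
      by (simp add: card_PiE finite_compatible_seqs card_compatible_seqs[OF Des_sub])
        (rule prod.cong[OF refl], simp add: comaj_vec_nth)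
  qed
  finally show "card (compatible_vecs R n k e) =
      (\<Sum>ps\<in>perm_tuples n (k - 1). inv_qpoch_coeff n k (comaj_vec R n k ps) e)" .
qed

lemma partition_nth_antimono:
  assumes "is_partition n la" "r' \<le> r" "r < length la"
  shows "la ! r \<le> la ! r'"
proof (cases "r' = r")
  case False
  then have "r' < r" using assms by simp
  then show ?thesis using assms unfolding is_partition_def by (simp add: sorted_wrt_iff_nth_less)
qed simp

lemma cells_down_left:
  assumes "is_partition n la" "(r, j) \<in> cells la" "r' \<le> r" "j' \<le> j"
  shows "(r', j') \<in> cells la"
  using assms partition_nth_antimono[OF assms(1) assms(3)] unfolding cells_def by auto

lemma finite_cells: "finite (cells la)"
proof (rule finite_subset)
  show "cells la \<subseteq> {0..<length la} \<times> {0..<Max (set la \<union> {0})}"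
    unfolding cells_def
  proof clarsimp
    fix i j assume "i < length la" "j < la ! i"
    moreover have "la ! i \<le> Max (insert 0 (set la))" using \<open>i < length la\<close> by (intro Max_ge) auto
    ultimately show "j < Max (insert 0 (set la))" by linarith
  qed
qed simp

lemma card_cells: "card (cells la) = sum_list la"
proof (induction la rule: rev_induct)
  case (snoc x la)
  have "cells (la @ [x]) = cells la \<union> {length la} \<times> {0..<x}"
    unfolding cells_def by (auto simp: nth_append less_Suc_eq)
  moreover have "cells la \<inter> {length la} \<times> {0..<x} = {}" unfolding cells_def by auto
  ultimately have "card (cells (la @ [x])) = card (cells la) + x"
    using finite_cells[of la] by (simp add: card_Un_disjoint card_cartesian_product)
  then show ?case using snoc by simp
qed (simp add: cells_def)

lemma card_cells_partition: "is_partition n la \<Longrightarrow> card (cells la) = n"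
  unfolding is_partition_def using card_cells by simp

lemma ssyt_row_mono:
  assumes "is_ssyt la T" "(r, j') \<in> cells la" "j \<le> j'"
  shows "T (r, j) \<le> T (r, j')"
  using assms(3,2)
proof (induction j' rule: dec_induct)
  case (step m)
  have "(r, m) \<in> cells la" using step(4) unfolding cells_def by auto
  then show ?case using step assms(1) unfolding is_ssyt_def by (meson order_trans)
qed simp

lemma ssyt_col_less:
  assumes "is_ssyt la T" "(r', j) \<in> cells la" "r < r'" "is_partition n la"
  shows "T (r, j) < T (r', j)"
  using assms(3,2)
proof (induction r' rule: less_Suc_induct)
  case (1 i)
  then show ?case using assms(1) unfolding is_ssyt_def by simp
next
  case (2 i j' k)
  then show ?case
    using cells_down_left[OF assms(4) 2(5), of j' j] by (meson less_imp_le order.refl less_trans)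
qed

lemma syt_is_ssyt: "is_syt n la S \<Longrightarrow> is_ssyt la S"
  unfolding is_syt_def is_ssyt_def by (auto intro: less_imp_le)

lemma syt_mono:
  assumes S: "is_syt n la S" and p: "is_partition n la"
    and c: "(r1, j1) \<in> cells la" and le: "r2 \<le> r1" "j2 \<le> j1"
  shows "S (r2, j2) \<le> S (r1, j1)"
proof -
  have ssyt: "is_ssyt la S" by (rule syt_is_ssyt[OF S])
  have c2: "(r1, j2) \<in> cells la" using cells_down_left[OF p c] le by simp
  have "S (r2, j2) \<le> S (r1, j2)"
  proof (cases "r2 = r1")
    case False
    then show ?thesis using ssyt_col_less[OF ssyt c2 _ p] le by (simp add: less_imp_le)
  qed simp
  also have "\<dots> \<le> S (r1, j1)" using ssyt_row_mono[OF ssyt c le(2)] .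
  finally show ?thesis .
qed

lemma finite_SYT: "finite (SYT n la)"
proof -
  have inj: "inj_on (\<lambda>T. restrict T (cells la)) (SYT n la)"
  proof (rule inj_onI)
    fix S T assume S: "S \<in> SYT n la" and T: "T \<in> SYT n la"
      and eq: "restrict S (cells la) = restrict T (cells la)"
    show "S = T"
    proof
      fix c show "S c = T c"
      proof (cases "c \<in> cells la")
        case True then show ?thesis using eq by (metis restrict_apply')
      next
        case False then show ?thesis using S T unfolding SYT_def is_syt_def by (cases c) simp
      qed
    qed
  qed
  have "(\<lambda>T. restrict T (cells la)) ` SYT n la \<subseteq> cells la \<rightarrow>\<^sub>E {1..n}"
    unfolding SYT_def is_syt_def by (auto simp: bij_betw_def)
  then have "finite ((\<lambda>T. restrict T (cells la)) ` SYT n la)"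
    by (rule finite_subset) (simp add: finite_PiE finite_cells)
  then show ?thesis using finite_imageD[OF _ inj] by simp
qed

section \<open>Standardization\<close>

text \<open>Standardization numbers the cells by increasing entry, and cells with equal entries
  (a horizontal strip) from left to right.\<close>

definition std_key :: "(nat \<times> nat \<Rightarrow> nat) \<Rightarrow> nat \<times> nat \<Rightarrow> nat \<times> nat" where
  "std_key T c = (T c, snd c)"

definition standardize :: "nat list \<Rightarrow> (nat \<times> nat \<Rightarrow> nat) \<Rightarrow> nat \<times> nat \<Rightarrow> nat" where
  "standardize la T c = (if c \<in> cells la then key_rank (cells la) (std_key T) c else 0)"

lemma inj_on_std_key:
  assumes "is_ssyt la T" "is_partition n la"
  shows "inj_on (std_key T) (cells la)"
proof (rule inj_onI)
  fix c c' assume c: "c \<in> cells la" "c' \<in> cells la" "std_key T c = std_key T c'"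
  obtain r j r' j' where rj: "c = (r, j)" "c' = (r', j')" by (cases c, cases c')
  have "j = j'" "T (r, j) = T (r', j')" using c(3) rj unfolding std_key_def by auto
  then have "r = r'"
    using ssyt_col_less[OF assms(1) _ _ assms(2)] c(1,2) rj by (metis less_irrefl linorder_neqE)
  then show "c = c'" using rj \<open>j = j'\<close> by simp
qed

lemma bij_betw_standardize:
  assumes "is_ssyt la T" "is_partition n la"
  shows "bij_betw (standardize la T) (cells la) {1..n}"
proof -
  have "bij_betw (key_rank (cells la) (std_key T)) (cells la) {1..n}"
    using bij_betw_key_rank[OF finite_cells inj_on_std_key[OF assms]]
    by (simp add: card_cells_partition[OF assms(2)])
  then show ?thesis
    by (rule bij_betw_cong[THEN iffD1, rotated]) (simp add: standardize_def)
qed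

lemma standardize_less_iff:
  assumes "c \<in> cells la" "c' \<in> cells la"
  shows "standardize la T c' < standardize la T c \<longleftrightarrow> std_key T c' < std_key T c"
  unfolding standardize_def using assms key_rank_less_iff[OF finite_cells] by simp

lemma std_key_less_iff: "std_key T c' < std_key T c \<longleftrightarrow> T c' < T c \<or> (T c' = T c \<and> snd c' < snd c)"
  unfolding std_key_def by (auto simp: less_prod_def')

lemma standardize_syt:
  assumes "is_ssyt la T" "is_partition n la"
  shows "is_syt n la (standardize la T)"
  unfolding is_syt_def
proof (intro conjI allI impI)
  show "bij_betw (standardize la T) (cells la) {1..n}" by (rule bij_betw_standardize[OF assms])
  show "standardize la T c = 0" if "c \<notin> cells la" for c
    using that unfolding standardize_def by simp
  fix i j
  show "standardize la T (i, j) < standardize la T (i, Suc j)" if c: "(i, Suc j) \<in> cells la"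
  proof -
    have c0: "(i, j) \<in> cells la" using c unfolding cells_def by auto
    have "T (i, j) \<le> T (i, Suc j)" using assms(1) c unfolding is_ssyt_def by auto
    then show ?thesis
      unfolding standardize_less_iff[OF c c0] std_key_less_iff by auto
  qed
  show "standardize la T (i, j) < standardize la T (Suc i, j)" if c: "(Suc i, j) \<in> cells la"
  proof -
    have c0: "(i, j) \<in> cells la" using cells_down_left[OF assms(2) c, of i j] by simp
    have "T (i, j) < T (Suc i, j)" using assms(1) c unfolding is_ssyt_def by auto
    then show ?thesis
      unfolding standardize_less_iff[OF c c0] std_key_less_iff by auto
  qed
qed

definition cell_of :: "nat list \<Rightarrow> (nat \<times> nat \<Rightarrow> nat) \<Rightarrow> nat \<Rightarrow> nat \<times> nat" where
  "cell_of la S m = inv_into (cells la) S m"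

lemma syt_des_cell_of:
  "syt_des n la S = {i \<in> {1..n-1}. fst (cell_of la S i) < fst (cell_of la S (Suc i))}"
  unfolding syt_des_def cell_of_def ..

lemma cell_of:
  assumes "bij_betw S (cells la) {1..n}"
  shows "\<And>m. m \<in> {1..n} \<Longrightarrow> cell_of la S m \<in> cells la"
    and "\<And>m. m \<in> {1..n} \<Longrightarrow> S (cell_of la S m) = m"
    and "\<And>c. c \<in> cells la \<Longrightarrow> cell_of la S (S c) = c"
  using assms unfolding cell_of_def
  by (auto simp: bij_betw_def inv_into_into f_inv_into_f inv_into_f_f)

definition entry_seq :: "nat list \<Rightarrow> nat \<Rightarrow> (nat \<times> nat \<Rightarrow> nat) \<Rightarrow> nat \<Rightarrow> nat" where
  "entry_seq la n T = (\<lambda>m\<in>{1..n}. T (cell_of la (standardize la T) m))"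

lemma entry_seq_compatible:
  assumes T: "is_ssyt la T" and p: "is_partition n la"
  shows "compatible n (syt_des n la (standardize la T)) (entry_seq la n T)"
  unfolding compatible_def
proof
  fix m assume m: "m \<in> {1..n-1}"
  define S where "S = standardize la T"
  have S_bij: "bij_betw S (cells la) {1..n}" unfolding S_def by (rule bij_betw_standardize[OF T p])
  have mm: "m \<in> {1..n}" "Suc m \<in> {1..n}" using m by auto
  define c c' where "c = cell_of la S m" and "c' = cell_of la S (Suc m)"
  have cc: "c \<in> cells la" "c' \<in> cells la" "S c = m" "S c' = Suc m"
    unfolding c_def c'_def using cell_of[OF S_bij] mm by auto
  have less: "T c < T c' \<or> (T c = T c' \<and> snd c < snd c')"
    using standardize_less_iff[OF cc(2) cc(1), of T] cc unfolding S_def std_key_less_iff by simp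
  have x: "entry_seq la n T m = T c" "entry_seq la n T (Suc m) = T c'"
    unfolding entry_seq_def c_def c'_def S_def using mm by auto
  have strict: "T c < T c'" if "m \<in> syt_des n la S"
  proof (rule ccontr)
    assume "\<not> T c < T c'"
    then have eq: "T c = T c'" and cj: "snd c < snd c'" using less by auto
    have rr: "fst c < fst c'" using that unfolding syt_des_cell_of c_def c'_def by simp
    obtain r j r' j' where rj: "c = (r, j)" "c' = (r', j')" by (cases c, cases c')
    have "(r, j') \<in> cells la" using cells_down_left[OF p, of r' j' r j'] cc(2) rr rj by auto
    then have "T (r, j) \<le> T (r, j')" using ssyt_row_mono[OF T] cj rj by auto
    also have "T (r, j') < T (r', j')" using ssyt_col_less[OF T _ _ p] cc(2) rr rj by auto
    finally show False using eq rj by simp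
  qed
  show "entry_seq la n T m \<le> entry_seq la n T (Suc m) \<and>
        (m \<in> syt_des n la (standardize la T) \<longrightarrow> entry_seq la n T m < entry_seq la n T (Suc m))"
    using less strict x unfolding S_def by auto
qed

lemma sum_entry_seq:
  assumes T: "is_ssyt la T" and p: "is_partition n la"
  shows "(\<Sum>c\<in>cells la. g (T c)) = (\<Sum>m=1..n. g (entry_seq la n T m))"
proof -
  define S where "S = standardize la T"
  have S_bij: "bij_betw S (cells la) {1..n}" unfolding S_def by (rule bij_betw_standardize[OF T p])
  have "(\<Sum>m=1..n. g (entry_seq la n T m)) = (\<Sum>c\<in>cells la. g (entry_seq la n T (S c)))"
    by (rule sum.reindex_bij_betw[OF S_bij, symmetric])
  also have "\<dots> = (\<Sum>c\<in>cells la. g (T c))"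
  proof (rule sum.cong[OF refl])
    fix c assume c: "c \<in> cells la"
    have "S c \<in> {1..n}" using S_bij c by (auto simp: bij_betw_def)
    then show "g (entry_seq la n T (S c)) = g (T c)"
      unfolding entry_seq_def using cell_of(3)[OF S_bij c] S_def by simp
  qed
  finally show ?thesis by simp
qed

definition fill :: "nat list \<Rightarrow> (nat \<times> nat \<Rightarrow> nat) \<Rightarrow> (nat \<Rightarrow> nat) \<Rightarrow> nat \<times> nat \<Rightarrow> nat" where
  "fill la S x = (\<lambda>c. if c \<in> cells la then x (S c) else 0)"

lemma syt_nondescent_step:
  assumes S: "is_syt n la S" and p: "is_partition n la" and t: "t \<in> {1..n-1}"
    and nd: "t \<notin> syt_des n la S"
  shows "fst (cell_of la S (Suc t)) \<le> fst (cell_of la S t) \<and>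
    snd (cell_of la S t) < snd (cell_of la S (Suc t))"
proof -
  have S_bij: "bij_betw S (cells la) {1..n}" using S unfolding is_syt_def by simp
  have tt: "t \<in> {1..n}" "Suc t \<in> {1..n}" using t by auto
  obtain r1 j1 where c1: "cell_of la S t = (r1, j1)" by (cases "cell_of la S t")
  obtain r2 j2 where c2: "cell_of la S (Suc t) = (r2, j2)" by (cases "cell_of la S (Suc t)")
  have r: "r2 \<le> r1" using nd t c1 c2 unfolding syt_des_cell_of by auto
  have cin: "(r1, j1) \<in> cells la" "(r2, j2) \<in> cells la" using cell_of(1)[OF S_bij] tt c1 c2
    by metis+
  have Sv: "S (r1, j1) = t" "S (r2, j2) = Suc t" using cell_of(2)[OF S_bij] tt c1 c2 by metis+
  have "j1 < j2"
  proof (rule ccontr)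
    assume "\<not> j1 < j2"
    then have "S (r2, j2) \<le> S (r1, j1)" using syt_mono[OF S p cin(1) r] by simp
    then show False using Sv by simp
  qed
  then show ?thesis using r c1 c2 by simp
qed

lemma syt_nondescent_run:
  assumes S: "is_syt n la S" and p: "is_partition n la"
    and ab: "1 \<le> a" "a < b" "b \<le> n"
    and nd: "\<And>t. a \<le> t \<Longrightarrow> t < b \<Longrightarrow> t \<notin> syt_des n la S"
  shows "fst (cell_of la S b) \<le> fst (cell_of la S a) \<and> snd (cell_of la S a) < snd (cell_of la S b)"
proof -
  have "Suc a \<le> b" using ab by simp
  then show ?thesis using ab(3) nd
  proof (induction b rule: dec_induct)
    case base
    have "a \<in> {1..n-1}" using base ab(1) by auto
    then show ?case using syt_nondescent_step[OF S p _ base(2)[of a]] by auto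
  next
    case (step m)
    have "m \<in> {1..n-1}" using step ab(1) by auto
    then show ?case using step syt_nondescent_step[OF S p, of m] by force
  qed
qed

lemma fill_ssyt:
  assumes S: "is_syt n la S" and p: "is_partition n la" and x: "compatible n (syt_des n la S) x"
  shows "is_ssyt la (fill la S x)"
  unfolding is_ssyt_def
proof (intro conjI allI impI)
  have S_bij: "bij_betw S (cells la) {1..n}" using S unfolding is_syt_def by simp
  show "fill la S x c = 0" if "c \<notin> cells la" for c using that unfolding fill_def by simp
  fix i j
  show "fill la S x (i, j) \<le> fill la S x (i, Suc j)" if c: "(i, Suc j) \<in> cells la"
  proof -
    have c0: "(i, j) \<in> cells la" using c unfolding cells_def by auto
    have "S (i, j) < S (i, Suc j)" using S c unfolding is_syt_def by auto
    moreover have "S (i, j) \<in> {1..n}" "S (i, Suc j) \<in> {1..n}"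
      using S_bij c c0 by (auto simp: bij_betw_def)
    ultimately have "x (S (i, j)) \<le> x (S (i, Suc j))" using compatible_mono[OF x] by auto
    then show ?thesis unfolding fill_def using c c0 by simp
  qed
  show "fill la S x (i, j) < fill la S x (Suc i, j)" if c: "(Suc i, j) \<in> cells la"
  proof -
    have c0: "(i, j) \<in> cells la" using cells_down_left[OF p c, of i j] by simp
    define a b where "a = S (i, j)" and "b = S (Suc i, j)"
    have ab: "a < b" using S c unfolding is_syt_def a_def b_def by auto
    have abn: "a \<in> {1..n}" "b \<in> {1..n}"
      using S_bij c c0 unfolding a_def b_def by (auto simp: bij_betw_def)
    have ca: "cell_of la S a = (i, j)" "cell_of la S b = (Suc i, j)"
      unfolding a_def b_def using cell_of(3)[OF S_bij] c c0 by auto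
    have "\<exists>t. a \<le> t \<and> t < b \<and> t \<in> syt_des n la S"
    proof (rule ccontr)
      assume "\<not> ?thesis"
      then have "fst (cell_of la S b) \<le> fst (cell_of la S a)"
        using syt_nondescent_run[OF S p _ ab] abn by auto
      then show False using ca by simp
    qed
    then obtain t where "a \<le> t" "t < b" "t \<in> syt_des n la S" by auto
    then have "x a < x b" using compatible_less[OF x] abn by auto
    then show ?thesis unfolding fill_def a_def b_def using c c0 by simp
  qed
qed

lemma std_key_fill_less_iff:
  assumes S: "is_syt n la S" and p: "is_partition n la" and x: "compatible n (syt_des n la S) x"
    and c: "c \<in> cells la" and c': "c' \<in> cells la"
  shows "std_key (fill la S x) c' < std_key (fill la S x) c \<longleftrightarrow> S c' < S c"
proof -
  have S_bij: "bij_betw S (cells la) {1..n}" using S unfolding is_syt_def by simp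
  have less: "std_key (fill la S x) d' < std_key (fill la S x) d"
    if d: "d \<in> cells la" and d': "d' \<in> cells la" and l: "S d' < S d" for d d'
  proof -
    define a b where "a = S d'" and "b = S d"
    have abn: "a \<in> {1..n}" "b \<in> {1..n}"
      using S_bij d d' unfolding a_def b_def by (auto simp: bij_betw_def)
    have ca: "cell_of la S a = d'" "cell_of la S b = d"
      unfolding a_def b_def using cell_of(3)[OF S_bij] d d' by auto
    have le: "x a \<le> x b" using compatible_mono[OF x] abn l unfolding a_def b_def by auto
    show ?thesis
    proof (cases "x a < x b")
      case True
      then show ?thesis unfolding std_key_less_iff fill_def using d d' a_def b_def by auto
    next
      case False
      then have eq: "x a = x b" using le by simp
      have "t \<notin> syt_des n la S" if "a \<le> t" "t < b" for t
        using compatible_less[OF x, of a t b] abn eq that by auto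
      then have "snd d' < snd d"
        using syt_nondescent_run[OF S p _ l[folded a_def b_def]] abn ca by auto
      then show ?thesis unfolding std_key_less_iff fill_def using d d' eq a_def b_def by auto
    qed
  qed
  show ?thesis
  proof
    assume l: "std_key (fill la S x) c' < std_key (fill la S x) c"
    show "S c' < S c"
    proof (rule ccontr)
      assume "\<not> S c' < S c"
      then have "S c < S c' \<or> S c = S c'" by auto
      then show False
      proof
        assume "S c < S c'"
        then show False using less[OF c' c] l by simp
      next
        assume "S c = S c'"
        then have "c = c'" using S_bij c c' by (auto simp: bij_betw_def dest: inj_onD)
        then show False using l by simp
      qed
    qed
  qed (rule less[OF c c'])
qed

lemma standardize_fill:
  assumes S: "is_syt n la S" and p: "is_partition n la" and x: "compatible n (syt_des n la S) x"
  shows "standardize la (fill la S x) = S"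
proof
  fix c
  have S_bij: "bij_betw S (cells la) {1..n}" using S unfolding is_syt_def by simp
  show "standardize la (fill la S x) c = S c"
  proof (cases "c \<in> cells la")
    case True
    have "{c' \<in> cells la. std_key (fill la S x) c' < std_key (fill la S x) c} =
        {c' \<in> cells la. S c' < S c}"
      using std_key_fill_less_iff[OF S p x True] by auto
    moreover have "S ` {c' \<in> cells la. S c' < S c} = {1..<S c}"
    proof
      show "S ` {c' \<in> cells la. S c' < S c} \<subseteq> {1..<S c}" using S_bij by (auto simp: bij_betw_def)
      show "{1..<S c} \<subseteq> S ` {c' \<in> cells la. S c' < S c}"
      proof
        fix m assume m: "m \<in> {1..<S c}"
        have "S c \<le> n" using S_bij True by (auto simp: bij_betw_def)
        then have "m \<in> {1..n}" using m by auto
        then have "cell_of la S m \<in> cells la" "S (cell_of la S m) = m" using cell_of[OF S_bij]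
          by auto
        then show "m \<in> S ` {c' \<in> cells la. S c' < S c}" using m by force
      qed
    qed
    moreover have "inj_on S {c' \<in> cells la. S c' < S c}"
      using S_bij by (auto simp: bij_betw_def intro: inj_on_subset)
    moreover have "S c \<ge> 1" using S_bij True by (auto simp: bij_betw_def)
    ultimately show ?thesis
      unfolding standardize_def key_rank_def using True card_image by fastforce
  next
    case False
    then show ?thesis using S unfolding standardize_def is_syt_def by (cases c) simp
  qed
qed

lemma entry_seq_fill:
  assumes S: "is_syt n la S" and p: "is_partition n la" and x: "compatible n (syt_des n la S) x"
  shows "entry_seq la n (fill la S x) = restrict x {1..n}"
proof
  fix m
  have S_bij: "bij_betw S (cells la) {1..n}" using S unfolding is_syt_def by simp
  show "entry_seq la n (fill la S x) m = restrict x {1..n} m"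
    unfolding entry_seq_def standardize_fill[OF S p x] using cell_of[OF S_bij]
      by (simp add: fill_def)
qed

lemma fill_standardize:
  assumes T: "is_ssyt la T" and p: "is_partition n la"
  shows "fill la (standardize la T) (entry_seq la n T) = T"
proof
  fix c
  have S_bij: "bij_betw (standardize la T) (cells la) {1..n}" by (rule bij_betw_standardize[OF T p])
  show "fill la (standardize la T) (entry_seq la n T) c = T c"
  proof (cases "c \<in> cells la")
    case True
    have "standardize la T c \<in> {1..n}" using S_bij True by (auto simp: bij_betw_def)
    then show ?thesis unfolding fill_def entry_seq_def using True cell_of(3)[OF S_bij True] by simp
  next
    case False
    then show ?thesis using T unfolding fill_def is_ssyt_def by (cases c) simp
  qed
qed

theorem bij_betw_ssyt_standardization:
  assumes p: "is_partition n la"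
  shows "bij_betw (\<lambda>T. (standardize la T, entry_seq la n T)) {T. is_ssyt la T}
    (SIGMA S:SYT n la. {x \<in> {1..n} \<rightarrow>\<^sub>E UNIV. compatible n (syt_des n la S) x})"
proof (rule bij_betw_byWitness[where f' = "\<lambda>(S, x). fill la S x"])
  show "\<forall>T\<in>{T. is_ssyt la T}. (\<lambda>(S, x). fill la S x) (standardize la T, entry_seq la n T) = T"
    using fill_standardize[OF _ p] by auto
  show "\<forall>Sx\<in>(SIGMA S:SYT n la. {x \<in> {1..n} \<rightarrow>\<^sub>E UNIV. compatible n (syt_des n la S) x}).
      (\<lambda>T. (standardize la T, entry_seq la n T)) ((\<lambda>(S, x). fill la S x) Sx) = Sx"
  proof
    fix Sx assume "Sx \<in> (SIGMA S:SYT n la. {x \<in> {1..n} \<rightarrow>\<^sub>E UNIV. compatible n (syt_des n la S) x})"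
    then obtain S x where Sx: "Sx = (S, x)" and S: "is_syt n la S"
      and x: "x \<in> {1..n} \<rightarrow>\<^sub>E UNIV" "compatible n (syt_des n la S) x"
      unfolding SYT_def by auto
    have "restrict x {1..n} = x" using x(1) by (simp add: PiE_restrict)
    then show "(\<lambda>T. (standardize la T, entry_seq la n T)) ((\<lambda>(S, x). fill la S x) Sx) = Sx"
      unfolding Sx using standardize_fill[OF S p x(2)] entry_seq_fill[OF S p x(2)] by simp
  qed
  show "(\<lambda>T. (standardize la T, entry_seq la n T)) ` {T. is_ssyt la T} \<subseteq>
      (SIGMA S:SYT n la. {x \<in> {1..n} \<rightarrow>\<^sub>E UNIV. compatible n (syt_des n la S) x})"
    using standardize_syt[OF _ p] entry_seq_compatible[OF _ p]
    by (auto simp: SYT_def entry_seq_def)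
  show "(\<lambda>(S, x). fill la S x) ` (SIGMA S:SYT n la. {x \<in> {1..n} \<rightarrow>\<^sub>E UNIV. compatible n (syt_des n la S) x})
      \<subseteq> {T. is_ssyt la T}"
    using fill_ssyt[OF _ p] by (auto simp: SYT_def)
qed

text \<open>Entry \<open>m\<close> of a tableau stands for the monomial \<open>q\<^bsup>W m\<^esup>\<close>, so these are the
  tableaux contributing to the coefficient of \<open>q\<^sup>a\<close>.\<close>

definition ssyt_of_weight ::
    "nat list \<Rightarrow> nat \<Rightarrow> (nat \<Rightarrow> nat list) \<Rightarrow> nat list \<Rightarrow> (nat \<times> nat \<Rightarrow> nat) set" where
  "ssyt_of_weight la k W a = {T. is_ssyt la T \<and> (\<forall>i<k. (\<Sum>c\<in>cells la. W (T c) ! i) = a ! i)}"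

definition compatible_of_weight ::
    "nat \<Rightarrow> nat set \<Rightarrow> nat \<Rightarrow> (nat \<Rightarrow> nat list) \<Rightarrow> nat list \<Rightarrow> (nat \<Rightarrow> nat) set" where
  "compatible_of_weight n D k W a =
     {x \<in> {1..n} \<rightarrow>\<^sub>E UNIV. compatible n D x \<and> (\<forall>i<k. (\<Sum>m=1..n. W (x m) ! i) = a ! i)}"

lemma card_ssyt_of_weight:
  assumes p: "is_partition n la"
    and fin: "\<And>S. S \<in> SYT n la \<Longrightarrow> finite (compatible_of_weight n (syt_des n la S) k W a)"
  shows "card (ssyt_of_weight la k W a) =
    (\<Sum>S\<in>SYT n la. card (compatible_of_weight n (syt_des n la S) k W a))"
proof -
  define weight_ok where "weight_ok x \<longleftrightarrow> (\<forall>i<k. (\<Sum>m=1..n. W (x m) ! i) = a ! i)" for x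
  have "weight_ok (entry_seq la n T) \<longleftrightarrow> (\<forall>i<k. (\<Sum>c\<in>cells la. W (T c) ! i) = a ! i)"
    if "is_ssyt la T" for T
    unfolding weight_ok_def using sum_entry_seq[OF that p, of "\<lambda>v. W v ! _"] by simp
  then have "ssyt_of_weight la k W a = {T \<in> {T. is_ssyt la T}. weight_ok (entry_seq la n T)}"
    unfolding ssyt_of_weight_def by auto
  moreover have "bij_betw (\<lambda>T. (standardize la T, entry_seq la n T))
      {T \<in> {T. is_ssyt la T}. weight_ok (entry_seq la n T)}
      {Sx \<in> (SIGMA S:SYT n la. {x \<in> {1..n} \<rightarrow>\<^sub>E UNIV. compatible n (syt_des n la S) x}).
        weight_ok (snd Sx)}"
    by (rule bij_betw_Collect[OF bij_betw_ssyt_standardization[OF p]]) simp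
  moreover have "{Sx \<in> (SIGMA S:SYT n la. {x \<in> {1..n} \<rightarrow>\<^sub>E UNIV. compatible n (syt_des n la S) x}).
        weight_ok (snd Sx)} = (SIGMA S:SYT n la. compatible_of_weight n (syt_des n la S) k W a)"
    unfolding compatible_of_weight_def weight_ok_def by auto
  ultimately show ?thesis
    using finite_SYT fin by (simp add: bij_betw_same_card card_SigmaI)
qed

section \<open>The Bender--Knuth involution\<close>

text \<open>Fix \<open>x\<close>. A cell with entry \<open>x\<close> or \<open>x + 1\<close> is free unless it belongs to a
  vertical domino with \<open>x\<close> above \<open>x + 1\<close>. In every row the free cells are contiguous,
  \<open>a\<close> entries \<open>x\<close> followed by \<open>b\<close> entries \<open>x + 1\<close>; the involution refills them with
  \<open>b\<close> entries \<open>x\<close> followed by \<open>a\<close> entries \<open>x + 1\<close>, which exchanges the numbers of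
  entries \<open>x\<close> and \<open>x + 1\<close>.\<close>

definition paired_down :: "nat list \<Rightarrow> nat \<Rightarrow> (nat \<times> nat \<Rightarrow> nat) \<Rightarrow> nat \<Rightarrow> nat \<Rightarrow> bool" where
  "paired_down la x T r j \<longleftrightarrow> T (r, j) = x \<and> (Suc r, j) \<in> cells la \<and> T (Suc r, j) = Suc x"

definition paired_up :: "nat list \<Rightarrow> nat \<Rightarrow> (nat \<times> nat \<Rightarrow> nat) \<Rightarrow> nat \<Rightarrow> nat \<Rightarrow> bool" where
  "paired_up la x T r j \<longleftrightarrow> T (r, j) = Suc x \<and> 0 < r \<and> T (r - 1, j) = x"

definition free_cell :: "nat list \<Rightarrow> nat \<Rightarrow> (nat \<times> nat \<Rightarrow> nat) \<Rightarrow> nat \<Rightarrow> nat \<Rightarrow> bool" where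
  "free_cell la x T r j \<longleftrightarrow> (r, j) \<in> cells la \<and>
     ((T (r, j) = x \<and> \<not> paired_down la x T r j) \<or> (T (r, j) = Suc x \<and> \<not> paired_up la x T r j))"

definition free_cols :: "nat list \<Rightarrow> nat \<Rightarrow> (nat \<times> nat \<Rightarrow> nat) \<Rightarrow> nat \<Rightarrow> nat set" where
  "free_cols la x T r = {j. free_cell la x T r j}"

definition free_x_cols :: "nat list \<Rightarrow> nat \<Rightarrow> (nat \<times> nat \<Rightarrow> nat) \<Rightarrow> nat \<Rightarrow> nat set" where
  "free_x_cols la x T r = {j \<in> free_cols la x T r. T (r, j) = x}"

definition free_Suc_cols :: "nat list \<Rightarrow> nat \<Rightarrow> (nat \<times> nat \<Rightarrow> nat) \<Rightarrow> nat \<Rightarrow> nat set" where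
  "free_Suc_cols la x T r = {j \<in> free_cols la x T r. T (r, j) = Suc x}"

definition free_rank :: "nat list \<Rightarrow> nat \<Rightarrow> (nat \<times> nat \<Rightarrow> nat) \<Rightarrow> nat \<Rightarrow> nat \<Rightarrow> nat" where
  "free_rank la x T r j = card {j' \<in> free_cols la x T r. j' < j}"

definition bender_knuth :: "nat list \<Rightarrow> nat \<Rightarrow> (nat \<times> nat \<Rightarrow> nat) \<Rightarrow> nat \<times> nat \<Rightarrow> nat" where
  "bender_knuth la x T = (\<lambda>(r, j).
     if free_cell la x T r j
     then (if free_rank la x T r j < card (free_Suc_cols la x T r) then x else Suc x)
     else T (r, j))"

lemma bender_knuth_apply:
  "bender_knuth la x T (r, j) =
     (if free_cell la x T r j
      then (if free_rank la x T r j < card (free_Suc_cols la x T r) then x else Suc x)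
      else T (r, j))"
  unfolding bender_knuth_def by simp

lemma sum_two_values:
  assumes "finite A" "\<And>a. a \<in> A \<Longrightarrow> f a = u \<or> f a = w"
  shows "(\<Sum>a\<in>A. g (f a)) = card {a \<in> A. f a = u} * g u + card {a \<in> A. f a \<noteq> u} * (g w :: nat)"
proof -
  have "(\<Sum>a\<in>A. g (f a)) = (\<Sum>a\<in>A. if f a = u then g u else g w)"
    using assms(2) by (intro sum.cong) auto
  also have "\<dots> = card {a \<in> A. f a = u} * g u + card {a \<in> A. f a \<noteq> u} * g w"
    using assms(1) by (simp add: sum.If_cases Int_def)
  finally show ?thesis .
qed

locale bk_tableau =
  fixes la :: "nat list" and n :: nat and x :: nat and T :: "nat \<times> nat \<Rightarrow> nat"
  assumes partition: "is_partition n la" and ssyt: "is_ssyt la T"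
begin

lemma free_cols_subset: "free_cols la x T r \<subseteq> {0..<la ! r}"
  unfolding free_cols_def free_cell_def cells_def by auto

lemma finite_free_cols: "finite (free_cols la x T r)"
  using free_cols_subset finite_subset by blast

lemma free_cell_in_cells: "free_cell la x T r j \<Longrightarrow> (r, j) \<in> cells la"
  unfolding free_cell_def by simp

lemma free_cell_cases: "free_cell la x T r j \<Longrightarrow> T (r, j) = x \<or> T (r, j) = Suc x"
  unfolding free_cell_def by auto

lemma outside_zero: "c \<notin> cells la \<Longrightarrow> T c = 0"
  using ssyt unfolding is_ssyt_def by (cases c) auto

lemma row_mono: "(r, j') \<in> cells la \<Longrightarrow> j \<le> j' \<Longrightarrow> T (r, j) \<le> T (r, j')"
  by (rule ssyt_row_mono[OF ssyt])

lemma col_less: "(Suc r, j) \<in> cells la \<Longrightarrow> T (r, j) < T (Suc r, j)"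
  using ssyt unfolding is_ssyt_def by auto

lemma cell_above: "(Suc r, j) \<in> cells la \<Longrightarrow> (r, j) \<in> cells la"
  using cells_down_left[OF partition] by auto

lemma cell_left: "(r, j') \<in> cells la \<Longrightarrow> j \<le> j' \<Longrightarrow> (r, j) \<in> cells la"
  unfolding cells_def by auto

lemma paired_down_left:
  assumes "paired_down la x T r j" "j' < j" "T (r, j') = x"
  shows "paired_down la x T r j'"
proof -
  have c: "(Suc r, j') \<in> cells la"
    using assms(1,2) cells_down_left[OF partition, of "Suc r" j "Suc r" j']
      unfolding paired_down_def by auto
  have "T (Suc r, j') \<le> T (Suc r, j)" using row_mono[of "Suc r" j j'] assms(1,2)
    unfolding paired_down_def by auto
  moreover have "T (r, j') < T (Suc r, j')" using col_less[OF c] .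
  ultimately have "T (Suc r, j') = Suc x" using assms unfolding paired_down_def by auto
  then show ?thesis using c assms(3) unfolding paired_down_def by simp
qed

lemma paired_up_right:
  assumes "paired_up la x T r j" "j < j'" "(r, j') \<in> cells la" "T (r, j') = Suc x"
  shows "paired_up la x T r j'"
proof -
  obtain r' where r: "r = Suc r'" using assms(1) unfolding paired_up_def by (cases r) auto
  have c: "(r', j') \<in> cells la" using cell_above assms(3) r by simp
  have "T (r', j) \<le> T (r', j')" using row_mono[OF c] assms(2) by simp
  moreover have "T (r', j') < T (Suc r', j')" using col_less assms(3) r by simp
  ultimately have "T (r', j') = x" using assms r unfolding paired_up_def by auto
  then show ?thesis using assms(4) r unfolding paired_up_def by simp
qed

lemma free_cell_not_stacked: "free_cell la x T r j \<Longrightarrow> free_cell la x T (Suc r) j \<Longrightarrow> False"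
proof -
  assume a: "free_cell la x T r j" and b: "free_cell la x T (Suc r) j"
  have c: "(Suc r, j) \<in> cells la" using b unfolding free_cell_def by simp
  have lt: "T (r, j) < T (Suc r, j)" using col_less[OF c] .
  then have "T (r, j) = x" "T (Suc r, j) = Suc x" using free_cell_cases[OF a] free_cell_cases[OF b]
    by auto
  then show False using a b c unfolding free_cell_def paired_down_def paired_up_def by auto
qed

lemma free_below:
  assumes a: "free_cell la x T r j" and c: "(Suc r, j) \<in> cells la"
  shows "Suc x < T (Suc r, j)"
proof -
  have lt: "T (r, j) < T (Suc r, j)" using col_less[OF c] .
  show ?thesis
  proof (rule ccontr)
    assume "\<not> Suc x < T (Suc r, j)"
    then have "T (r, j) = x" "T (Suc r, j) = Suc x" using free_cell_cases[OF a] lt by auto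
    then show False using a c unfolding free_cell_def paired_down_def by auto
  qed
qed

lemma free_above:
  assumes b: "free_cell la x T (Suc r) j"
  shows "T (r, j) < x"
proof -
  have c: "(Suc r, j) \<in> cells la" using b unfolding free_cell_def by simp
  have lt: "T (r, j) < T (Suc r, j)" using col_less[OF c] .
  show ?thesis
  proof (rule ccontr)
    assume "\<not> T (r, j) < x"
    then have "T (r, j) = x" "T (Suc r, j) = Suc x" using free_cell_cases[OF b] lt by auto
    then show False using b unfolding free_cell_def paired_up_def by auto
  qed
qed

lemma free_rank_Suc:
  assumes f: "free_cell la x T r j"
  shows "free_rank la x T r (Suc j) = Suc (free_rank la x T r j)"
proof -
  have "{j' \<in> free_cols la x T r. j' < Suc j} = insert j {j' \<in> free_cols la x T r. j' < j}"
    using f unfolding free_cols_def by auto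
  then show ?thesis unfolding free_rank_def using finite_free_cols by simp
qed

lemma free_value:
  assumes f: "free_cell la x T r j"
  shows "T (r, j) = x \<longleftrightarrow> free_rank la x T r j < card (free_x_cols la x T r)"
proof
  assume tx: "T (r, j) = x"
  have "{j' \<in> free_cols la x T r. j' < j} \<subseteq> free_x_cols la x T r - {j}"
  proof
    fix j' assume j': "j' \<in> {j' \<in> free_cols la x T r. j' < j}"
    then have "T (r, j') \<le> T (r, j)" using row_mono free_cell_in_cells f by auto
    then have "T (r, j') = x" using j' tx free_cell_cases unfolding free_cols_def by fastforce
    then show "j' \<in> free_x_cols la x T r - {j}" using j' unfolding free_x_cols_def by auto
  qed
  then have "free_rank la x T r j \<le> card (free_x_cols la x T r - {j})"
    unfolding free_rank_def
      by (intro card_mono) (auto simp: free_x_cols_def intro: finite_subset[OF _ finite_free_cols])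
  moreover have "j \<in> free_x_cols la x T r" using f tx unfolding free_x_cols_def free_cols_def
    by simp
  moreover have "finite (free_x_cols la x T r)" unfolding free_x_cols_def using finite_free_cols
    by simp
  ultimately show "free_rank la x T r j < card (free_x_cols la x T r)"
    by (metis card_Diff1_less le_less_trans)
next
  assume l: "free_rank la x T r j < card (free_x_cols la x T r)"
  show "T (r, j) = x"
  proof (rule ccontr)
    assume "T (r, j) \<noteq> x"
    then have ty: "T (r, j) = Suc x" using free_cell_cases[OF f] by simp
    have "free_x_cols la x T r \<subseteq> {j' \<in> free_cols la x T r. j' < j}"
    proof
      fix j' assume j': "j' \<in> free_x_cols la x T r"
      have "j' < j"
      proof (rule ccontr)
        assume "\<not> j' < j"
        then have "T (r, j) \<le> T (r, j')" using row_mono j' free_cell_in_cells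
          unfolding free_x_cols_def free_cols_def by auto
        then show False using ty j' unfolding free_x_cols_def by simp
      qed
      then show "j' \<in> {j' \<in> free_cols la x T r. j' < j}" using j' unfolding free_x_cols_def by simp
    qed
    then have "card (free_x_cols la x T r) \<le> free_rank la x T r j"
      unfolding free_rank_def
        by (intro card_mono) (auto intro: finite_subset[OF _ finite_free_cols])
    then show False using l by simp
  qed
qed


lemma bender_knuth_free:
  "free_cell la x T r j \<Longrightarrow> bender_knuth la x T (r, j) = x \<or> bender_knuth la x T (r, j) = Suc x"
  by (simp add: bender_knuth_apply)

lemma bender_knuth_fixed: "\<not> free_cell la x T r j \<Longrightarrow> bender_knuth la x T (r, j) = T (r, j)"
  by (simp add: bender_knuth_apply)

lemma bender_knuth_row_mono:
  assumes c: "(i, Suc j) \<in> cells la"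
  shows "bender_knuth la x T (i, j) \<le> bender_knuth la x T (i, Suc j)"
proof -
  have c0: "(i, j) \<in> cells la" using cell_left[OF c] by simp
  have T_le: "T (i, j) \<le> T (i, Suc j)" using row_mono[OF c] by simp
  consider "free_cell la x T i j" "free_cell la x T i (Suc j)"
    | "free_cell la x T i j" "\<not> free_cell la x T i (Suc j)"
    | "\<not> free_cell la x T i j" "free_cell la x T i (Suc j)"
    | "\<not> free_cell la x T i j" "\<not> free_cell la x T i (Suc j)"
    by blast
  then show ?thesis
  proof cases
    case 1
    then show ?thesis using free_rank_Suc[OF 1(1)] by (auto simp: bender_knuth_apply)
  next
    case 2
    have "Suc x \<le> T (i, Suc j)"
    proof (rule ccontr)
      assume "\<not> Suc x \<le> T (i, Suc j)"
      then have tx: "T (i, Suc j) = x" "T (i, j) = x" using free_cell_cases[OF 2(1)] T_le by auto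
      then have "paired_down la x T i (Suc j)" using 2(2) c unfolding free_cell_def by auto
      then have "paired_down la x T i j" using paired_down_left tx by auto
      then show False using 2(1) tx unfolding free_cell_def by auto
    qed
    then show ?thesis using 2 by (auto simp: bender_knuth_apply)
  next
    case 3
    have "T (i, j) \<le> x"
    proof (rule ccontr)
      assume "\<not> T (i, j) \<le> x"
      then have ty: "T (i, j) = Suc x" "T (i, Suc j) = Suc x" using free_cell_cases[OF 3(2)] T_le
        by auto
      then have "paired_up la x T i j" using 3(1) c0 unfolding free_cell_def by auto
      then have "paired_up la x T i (Suc j)" using paired_up_right c ty by auto
      then show False using 3(2) ty unfolding free_cell_def by auto
    qed
    then show ?thesis using 3 by (auto simp: bender_knuth_apply)
  next
    case 4
    then show ?thesis using T_le by (simp add: bender_knuth_apply)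
  qed
qed

lemma bender_knuth_col_less:
  assumes c: "(Suc i, j) \<in> cells la"
  shows "bender_knuth la x T (i, j) < bender_knuth la x T (Suc i, j)"
proof (cases "free_cell la x T i j")
  case True
  then have "\<not> free_cell la x T (Suc i) j" using free_cell_not_stacked by blast
  then show ?thesis using free_below[OF True c] True by (auto simp: bender_knuth_apply)
next
  case False
  then show ?thesis
    using free_above[of i j] col_less[OF c]
    by (cases "free_cell la x T (Suc i) j") (auto simp: bender_knuth_apply)
qed

lemma ssyt_bender_knuth: "is_ssyt la (bender_knuth la x T)"
  unfolding is_ssyt_def
  using bender_knuth_row_mono bender_knuth_col_less outside_zero free_cell_in_cells
  by (auto simp: bender_knuth_apply)

lemma free_cell_bender_knuth_if_free:
  assumes f: "free_cell la x T r j"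
  shows "free_cell la x (bender_knuth la x T) r j"
proof -
  have c: "(r, j) \<in> cells la" using free_cell_in_cells[OF f] .
  show ?thesis
  proof (cases "bender_knuth la x T (r, j) = x")
    case True
    have "\<not> paired_down la x (bender_knuth la x T) r j"
    proof
      assume px: "paired_down la x (bender_knuth la x T) r j"
      then have c1: "(Suc r, j) \<in> cells la" unfolding paired_down_def by simp
      have "\<not> free_cell la x T (Suc r) j" using free_cell_not_stacked f by blast
      then show False
        using free_below[OF f c1] px bender_knuth_fixed unfolding paired_down_def by fastforce
    qed
    then show ?thesis unfolding free_cell_def using c True by simp
  next
    case False
    then have Suc_x: "bender_knuth la x T (r, j) = Suc x" using bender_knuth_free[OF f] by simp
    have "\<not> paired_up la x (bender_knuth la x T) r j"
    proof
      assume py: "paired_up la x (bender_knuth la x T) r j"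
      then obtain r' where r: "r = Suc r'" unfolding paired_up_def by (cases r) auto
      have "\<not> free_cell la x T r' j" using free_cell_not_stacked f r by blast
      then show False
        using free_above[of r' j] f r py bender_knuth_fixed[of r' j] unfolding paired_up_def by auto
    qed
    then show ?thesis unfolding free_cell_def using c Suc_x by simp
  qed
qed

lemma free_cell_if_bender_knuth_free:
  assumes f: "free_cell la x (bender_knuth la x T) r j"
  shows "free_cell la x T r j"
proof (rule ccontr)
  assume nf: "\<not> free_cell la x T r j"
  then have e: "bender_knuth la x T (r, j) = T (r, j)" by (rule bender_knuth_fixed)
  have c: "(r, j) \<in> cells la" using f unfolding free_cell_def by simp
  have "T (r, j) = x \<or> T (r, j) = Suc x" using f e unfolding free_cell_def by auto
  then show False
  proof
    assume tx: "T (r, j) = x"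
    then have "paired_down la x T r j" using nf c unfolding free_cell_def by auto
    then have c1: "(Suc r, j) \<in> cells la" and ty: "T (Suc r, j) = Suc x"
      unfolding paired_down_def by auto
    have "paired_up la x T (Suc r) j" using ty tx unfolding paired_up_def by simp
    then have "\<not> free_cell la x T (Suc r) j" unfolding free_cell_def using ty by auto
    then have "bender_knuth la x T (Suc r, j) = Suc x" using bender_knuth_fixed ty by simp
    then have "paired_down la x (bender_knuth la x T) r j"
      using e tx c1 unfolding paired_down_def by simp
    then show False using f e tx unfolding free_cell_def by simp
  next
    assume ty: "T (r, j) = Suc x"
    then have "paired_up la x T r j" using nf c unfolding free_cell_def by auto
    then obtain r' where r: "r = Suc r'" and tx: "T (r', j) = x"
      unfolding paired_up_def by (cases r) auto
    have "paired_down la x T r' j" using tx ty c r unfolding paired_down_def by simp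
    then have "\<not> free_cell la x T r' j" unfolding free_cell_def using tx by auto
    then have "bender_knuth la x T (r', j) = x" using bender_knuth_fixed tx by simp
    then have "paired_up la x (bender_knuth la x T) r j" using e ty r unfolding paired_up_def
      by simp
    then show False using f e ty unfolding free_cell_def by simp
  qed
qed

lemma free_cell_bender_knuth: "free_cell la x (bender_knuth la x T) r j \<longleftrightarrow> free_cell la x T r j"
  using free_cell_bender_knuth_if_free free_cell_if_bender_knuth_free by blast

lemma free_cols_bender_knuth: "free_cols la x (bender_knuth la x T) r = free_cols la x T r"
proof -
  have "\<And>j. free_cell la x (bender_knuth la x T) r j = free_cell la x T r j"
    by (rule free_cell_bender_knuth)
  then show ?thesis unfolding free_cols_def by blast
qed

lemma free_rank_bender_knuth: "free_rank la x (bender_knuth la x T) r j = free_rank la x T r j"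
  unfolding free_rank_def free_cols_bender_knuth ..

lemma card_free_rank_less:
  assumes "m \<le> card (free_cols la x T r)"
  shows "card {j \<in> free_cols la x T r. free_rank la x T r j < m} = m"
proof -
  have "key_rank (free_cols la x T r) id j = Suc (free_rank la x T r j)" for j
    unfolding key_rank_def free_rank_def by simp
  then show ?thesis
    using card_key_rank_le[OF finite_free_cols inj_on_id assms] by (simp add: Suc_le_eq)
qed

lemma card_free_cols:
  "card (free_cols la x T r) = card (free_x_cols la x T r) + card (free_Suc_cols la x T r)"
proof -
  have "free_cols la x T r = free_x_cols la x T r \<union> free_Suc_cols la x T r"
    unfolding free_x_cols_def free_Suc_cols_def free_cols_def using free_cell_cases by auto
  moreover have "free_x_cols la x T r \<inter> free_Suc_cols la x T r = {}"
    unfolding free_x_cols_def free_Suc_cols_def by auto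
  moreover have "finite (free_x_cols la x T r)" "finite (free_Suc_cols la x T r)"
    unfolding free_x_cols_def free_Suc_cols_def using finite_free_cols by auto
  ultimately show ?thesis by (metis card_Un_disjoint)
qed

lemma free_Suc_cols_bender_knuth:
  "free_Suc_cols la x (bender_knuth la x T) r =
    free_cols la x T r -
      {j \<in> free_cols la x T r. free_rank la x T r j < card (free_Suc_cols la x T r)}"
  unfolding free_Suc_cols_def[of la x "bender_knuth la x T"] free_cols_bender_knuth
  by (auto simp: bender_knuth_apply free_cols_def)

lemma card_free_Suc_cols_bender_knuth:
  "card (free_Suc_cols la x (bender_knuth la x T) r) = card (free_x_cols la x T r)"
proof -
  have "card {j \<in> free_cols la x T r. free_rank la x T r j < card (free_Suc_cols la x T r)} =
      card (free_Suc_cols la x T r)"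
    by (rule card_free_rank_less) (simp add: card_free_cols)
  then show ?thesis
    unfolding free_Suc_cols_bender_knuth using finite_free_cols card_free_cols
    by (simp add: card_Diff_subset)
qed

lemma card_bender_knuth_eq_x:
  "card {j \<in> free_cols la x T r. bender_knuth la x T (r, j) = x} = card (free_Suc_cols la x T r)"
proof -
  have "{j \<in> free_cols la x T r. bender_knuth la x T (r, j) = x} =
      {j \<in> free_cols la x T r. free_rank la x T r j < card (free_Suc_cols la x T r)}"
    by (auto simp: bender_knuth_apply free_cols_def)
  then show ?thesis using card_free_rank_less card_free_cols by simp
qed

lemma bender_knuth_involution: "bender_knuth la x (bender_knuth la x T) = T"
proof (rule ext)
  fix c :: "nat \<times> nat"
  obtain r j where c: "c = (r, j)" by (cases c)
  show "bender_knuth la x (bender_knuth la x T) c = T c"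
  proof (cases "free_cell la x T r j")
    case True
    have "bender_knuth la x (bender_knuth la x T) (r, j) =
        (if free_rank la x T r j < card (free_x_cols la x T r) then x else Suc x)"
      using True unfolding bender_knuth_apply[of la x "bender_knuth la x T"]
      by (simp add: free_cell_bender_knuth free_rank_bender_knuth card_free_Suc_cols_bender_knuth)
    also have "\<dots> = T (r, j)" using free_value[OF True] free_cell_cases[OF True] by auto
    finally show ?thesis using c by simp
  next
    case False
    then show ?thesis using c free_cell_bender_knuth bender_knuth_fixed
      by (simp add: bender_knuth_apply)
  qed
qed


lemma sum_free_cols_bender_knuth:
  "(\<Sum>j\<in>free_cols la x T r. g (bender_knuth la x T (r, j))) =
    (\<Sum>j\<in>free_cols la x T r. g (transpose x (Suc x) (T (r, j))) :: nat)"
proof -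
  let ?F = "free_cols la x T r"
  have bk_values: "bender_knuth la x T (r, j) = x \<or> bender_knuth la x T (r, j) = Suc x"
    if "j \<in> ?F" for j
    using bender_knuth_free that unfolding free_cols_def by simp
  have transpose_values:
    "transpose x (Suc x) (T (r, j)) = Suc x \<or> transpose x (Suc x) (T (r, j)) = x"
    if "j \<in> ?F" for j
    using free_cell_cases that unfolding free_cols_def by (auto simp: transpose_def)
  have bk_x: "card {j \<in> ?F. bender_knuth la x T (r, j) = x} = card (free_Suc_cols la x T r)"
    by (rule card_bender_knuth_eq_x)
  have "{j \<in> ?F. bender_knuth la x T (r, j) \<noteq> x} = ?F - {j \<in> ?F. bender_knuth la x T (r, j) = x}"
    by auto
  then have bk_Suc: "card {j \<in> ?F. bender_knuth la x T (r, j) \<noteq> x} = card (free_x_cols la x T r)"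
    using bk_x card_free_cols finite_free_cols by (simp add: card_Diff_subset)
  have "{j \<in> ?F. transpose x (Suc x) (T (r, j)) = Suc x} = free_x_cols la x T r"
    "{j \<in> ?F. transpose x (Suc x) (T (r, j)) \<noteq> Suc x} = free_Suc_cols la x T r"
    unfolding free_x_cols_def free_Suc_cols_def using free_cell_cases unfolding free_cols_def
    by (auto simp: transpose_def)
  then show ?thesis
    using sum_two_values[OF finite_free_cols bk_values, where g = g]
      sum_two_values[OF finite_free_cols transpose_values, where g = g] bk_x bk_Suc
    by simp
qed

definition free_cells where "free_cells = {c \<in> cells la. free_cell la x T (fst c) (snd c)}"

definition fixed_cells where "fixed_cells = cells la - free_cells"

lemma sum_free_cells:
  "(\<Sum>c\<in>free_cells. g (bender_knuth la x T c)) =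
    (\<Sum>c\<in>free_cells. g (transpose x (Suc x) (T c)) :: nat)"
proof -
  have free_cells_Sigma: "free_cells = (SIGMA r:{0..<length la}. free_cols la x T r)"
    unfolding free_cells_def free_cols_def using free_cell_in_cells by (auto simp: cells_def)
  have "(\<Sum>c\<in>free_cells. h c) = (\<Sum>r\<in>{0..<length la}. \<Sum>j\<in>free_cols la x T r. h (r, j))"
    for h :: "nat \<times> nat \<Rightarrow> nat"
    unfolding free_cells_Sigma by (simp add: sum.Sigma finite_free_cols split_def)
  then show ?thesis using sum_free_cols_bender_knuth by simp
qed

text \<open>Fixed cells with entries \<open>x\<close> or \<open>x + 1\<close> come in vertical dominoes; swapping the two
  cells of each domino matches the entries of \<open>T\<close> with their transposed values.\<close>

definition partner where
  "partner c = (if c \<in> fixed_cells \<and> T c = x then (Suc (fst c), snd c)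
     else if c \<in> fixed_cells \<and> T c = Suc x then (fst c - 1, snd c) else c)"

lemma partner:
  assumes c: "c \<in> fixed_cells"
  shows "partner c \<in> fixed_cells \<and> partner (partner c) = c \<and>
    T (partner c) = transpose x (Suc x) (T c)"
proof -
  obtain r j where rj: "c = (r, j)" by (cases c)
  have cc: "(r, j) \<in> cells la" and nf: "\<not> free_cell la x T r j" using c rj
    unfolding fixed_cells_def free_cells_def by auto
  show ?thesis
  proof (cases "T c = x")
    case True
    then have px: "paired_down la x T r j" using nf cc rj unfolding free_cell_def by auto
    then have c1: "(Suc r, j) \<in> cells la" and ty: "T (Suc r, j) = Suc x" unfolding paired_down_def
      by auto
    have "paired_up la x T (Suc r) j" using ty True rj unfolding paired_up_def by simp
    then have n1: "(Suc r, j) \<in> fixed_cells" using c1 ty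
      unfolding fixed_cells_def free_cells_def free_cell_def by auto
    have p1: "partner c = (Suc r, j)" unfolding partner_def using c True rj by simp
    have p2: "partner (Suc r, j) = (r, j)" unfolding partner_def using n1 ty by simp
    show ?thesis using p1 p2 n1 ty True rj by simp
  next
    case False
    show ?thesis
    proof (cases "T c = Suc x")
      case True
      then have py: "paired_up la x T r j" using nf cc rj unfolding free_cell_def by auto
      then obtain r' where r: "r = Suc r'" and tx: "T (r', j) = x" unfolding paired_up_def
        by (cases r) auto
      have c1: "(r', j) \<in> cells la" using cell_above cc r by simp
      have "paired_down la x T r' j" using tx True rj r cc unfolding paired_down_def by simp
      then have n1: "(r', j) \<in> fixed_cells" using c1 tx
        unfolding fixed_cells_def free_cells_def free_cell_def by auto
      have p1: "partner c = (r', j)" unfolding partner_def using c True rj r by simp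
      have p2: "partner (r', j) = (r, j)" unfolding partner_def using n1 tx r by simp
      show ?thesis using p1 p2 n1 tx True rj by simp
    next
      case F2: False
      have "partner c = c" unfolding partner_def using False F2 by simp
      then show ?thesis using c False F2 by (simp add: transpose_def)
    qed
  qed
qed

lemma sum_fixed_cells:
  fixes g :: "nat \<Rightarrow> nat"
  shows "(\<Sum>c\<in>fixed_cells. g (bender_knuth la x T c)) =
    (\<Sum>c\<in>fixed_cells. g (transpose x (Suc x) (T c)))"
proof -
  have "(\<Sum>c\<in>fixed_cells. g (bender_knuth la x T c)) = (\<Sum>c\<in>fixed_cells. g (T c))"
    by (intro sum.cong) (auto simp: fixed_cells_def free_cells_def bender_knuth_apply)
  also have "\<dots> = (\<Sum>c\<in>fixed_cells. g (T (partner c)))"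
  proof (rule sum.reindex_bij_betw[symmetric])
    show "bij_betw partner fixed_cells fixed_cells"
      by (rule bij_betw_byWitness[where f' = partner]) (use partner in auto)
  qed
  also have "\<dots> = (\<Sum>c\<in>fixed_cells. g (transpose x (Suc x) (T c)))"
    using partner by (intro sum.cong) auto
  finally show ?thesis .
qed

lemma sum_bender_knuth:
  fixes g :: "nat \<Rightarrow> nat"
  shows "(\<Sum>c\<in>cells la. g (bender_knuth la x T c)) =
    (\<Sum>c\<in>cells la. g (transpose x (Suc x) (T c)))"
proof -
  have cu: "cells la = free_cells \<union> fixed_cells" "free_cells \<inter> fixed_cells = {}"
    unfolding fixed_cells_def free_cells_def by auto
  have fin: "finite free_cells" "finite fixed_cells"
    using finite_cells unfolding fixed_cells_def free_cells_def by auto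
  show ?thesis unfolding cu(1)
    using sum.union_disjoint[OF fin cu(2), of "\<lambda>c. g (bender_knuth la x T c)"]
      sum.union_disjoint[OF fin cu(2), of "\<lambda>c. g (transpose x (Suc x) (T c))"]
      sum_free_cells[of g] sum_fixed_cells[of g] by simp
qed

end

lemma bender_knuth_mem_ssyt_of_weight:
  assumes p: "is_partition n la" and T: "T \<in> ssyt_of_weight la k (W \<circ> transpose x (Suc x)) a"
  shows "bender_knuth la x T \<in> ssyt_of_weight la k W a"
proof -
  interpret bk_tableau la n x T using p T unfolding ssyt_of_weight_def by unfold_locales auto
  have "(\<Sum>c\<in>cells la. W (bender_knuth la x T c) ! i) = a ! i" if "i < k" for i
    using sum_bender_knuth[of "\<lambda>v. W v ! i"] T that unfolding ssyt_of_weight_def by simp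
  then show ?thesis unfolding ssyt_of_weight_def using ssyt_bender_knuth by simp
qed

lemma card_ssyt_of_weight_swap_adjacent:
  assumes p: "is_partition n la"
  shows "card (ssyt_of_weight la k (W \<circ> transpose x (Suc x)) a) = card (ssyt_of_weight la k W a)"
proof -
  have involution: "bender_knuth la x (bender_knuth la x T) = T"
    if "T \<in> ssyt_of_weight la k W' a" for T W'
  proof -
    interpret bk_tableau la n x T using p that unfolding ssyt_of_weight_def by unfold_locales auto
    show ?thesis by (rule bender_knuth_involution)
  qed
  have "bij_betw (bender_knuth la x) (ssyt_of_weight la k (W \<circ> transpose x (Suc x)) a)
      (ssyt_of_weight la k W a)"
  proof (rule bij_betw_byWitness[where f' = "bender_knuth la x"])
    have "(W \<circ> transpose x (Suc x)) \<circ> transpose x (Suc x) = W" by (simp add: comp_assoc)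
    then show "bender_knuth la x ` ssyt_of_weight la k W a \<subseteq>
        ssyt_of_weight la k (W \<circ> transpose x (Suc x)) a"
      using bender_knuth_mem_ssyt_of_weight[OF p, where W = "W \<circ> transpose x (Suc x)"] by auto
  qed (use involution bender_knuth_mem_ssyt_of_weight[OF p] in auto)
  then show ?thesis by (rule bij_betw_same_card)
qed

lemma card_ssyt_of_weight_transpose_add:
  assumes p: "is_partition n la"
  shows "card (ssyt_of_weight la k (W \<circ> transpose x (x + d)) a) = card (ssyt_of_weight la k W a)"
proof (induction d arbitrary: W)
  case (Suc d)
  show ?case
  proof (cases d)
    case 0
    then show ?thesis
      using card_ssyt_of_weight_swap_adjacent[OF p, of k W x a] unfolding comp_def by simp
  next
    case (Suc d')
    define t where "t = transpose (x + d) (Suc (x + d))"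
    have "transpose x (x + Suc d) = t \<circ> transpose x (x + d) \<circ> t"
      unfolding t_def using Suc by (auto simp: fun_eq_iff transpose_def)
    then have W_eq: "W \<circ> transpose x (x + Suc d) = ((W \<circ> t) \<circ> transpose x (x + d)) \<circ> t"
      by (simp add: comp_assoc)
    have "card (ssyt_of_weight la k (W \<circ> transpose x (x + Suc d)) a) =
        card (ssyt_of_weight la k ((W \<circ> t) \<circ> transpose x (x + d)) a)"
      unfolding W_eq t_def by (rule card_ssyt_of_weight_swap_adjacent[OF p])
    also have "\<dots> = card (ssyt_of_weight la k (W \<circ> t) a)" by (rule Suc.IH)
    also have "\<dots> = card (ssyt_of_weight la k W a)"
      unfolding t_def by (rule card_ssyt_of_weight_swap_adjacent[OF p])
    finally show ?thesis .
  qed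
qed simp

lemma card_ssyt_of_weight_transpose:
  assumes p: "is_partition n la"
  shows "card (ssyt_of_weight la k (W \<circ> transpose x y) a) = card (ssyt_of_weight la k W a)"
proof (cases "x \<le> y")
  case True
  then show ?thesis using card_ssyt_of_weight_transpose_add[OF p, of k W x "y - x" a] by simp
next
  case False
  then have "transpose x y = transpose y (y + (x - y))" by (simp add: transpose_commute)
  then show ?thesis using card_ssyt_of_weight_transpose_add[OF p, of k W y "x - y" a] by simp
qed

theorem card_ssyt_of_weight_permutes:
  assumes "\<rho> permutes U" "finite U" and p: "is_partition n la"
  shows "card (ssyt_of_weight la k (W \<circ> \<rho>) a) = card (ssyt_of_weight la k W a)"
  using assms(1,2)
proof (induct arbitrary: W rule: permutes_induct)
  case (swap x y \<rho>)
  have "W \<circ> (transpose x y \<circ> \<rho>) = (W \<circ> transpose x y) \<circ> \<rho>" by (simp add: comp_assoc)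
  then show ?case
    using swap(4)[of "W \<circ> transpose x y"] card_ssyt_of_weight_transpose[OF p, of k W x y a]
    unfolding comp_def by simp
qed simp

section \<open>Reducing to the reverse lexicographic enumeration\<close>

definition lists_below :: "nat \<Rightarrow> nat list \<Rightarrow> nat list set" where
  "lists_below k e = {a. length a = k \<and> list_all2 (\<le>) a e}"

lemma finite_lists_below: "finite (lists_below k e)"
proof (rule finite_subset)
  show "lists_below k e \<subseteq> {a. set a \<subseteq> {0..sum_list e} \<and> length a = k}"
  proof (clarsimp simp: lists_below_def)
    fix a y assume le: "list_all2 (\<le>) a e" and y: "y \<in> set a"
    then obtain i where i: "i < length a" "y = a ! i" by (metis in_set_conv_nth)
    have "a ! i \<le> e ! i" using le i list_all2_nthD by blast
    moreover have "e ! i \<le> sum_list e" using i le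
      by (simp add: list_all2_lengthD member_le_sum_list)
    ultimately show "y \<le> sum_list e" using i by simp
  qed
qed (rule finite_lists_length_eq, simp)

lemma mem_lists_below:
  fixes n :: nat
  assumes "\<forall>j\<in>{1..n}. length (v j) = k" "length e = k" "\<forall>i<k. (\<Sum>j=1..n. v j ! i) = e ! i"
    "j0 \<in> {1..n}"
  shows "v j0 \<in> lists_below k e"
proof -
  have "v j0 ! i \<le> e ! i" if "i < k" for i
  proof -
    have "v j0 ! i \<le> (\<Sum>j=1..n. v j ! i)" using assms(4) by (intro member_le_sum) auto
    then show ?thesis using assms(3) that by simp
  qed
  then show ?thesis unfolding lists_below_def using assms by (auto simp: list_all2_conv_all_nth)
qed

definition revlex_rank :: "nat \<Rightarrow> nat list \<Rightarrow> nat list \<Rightarrow> nat" where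
  "revlex_rank k e = key_rank (lists_below k e) rev"

definition revlex_unrank :: "nat \<Rightarrow> nat list \<Rightarrow> nat \<Rightarrow> nat list" where
  "revlex_unrank k e = inv_into (lists_below k e) (revlex_rank k e)"

lemma bij_betw_revlex_rank:
  "bij_betw (revlex_rank k e) (lists_below k e) {1..card (lists_below k e)}"
  unfolding revlex_rank_def
  by (rule bij_betw_key_rank[OF finite_lists_below]) (simp add: inj_on_def)

lemma revlex_rank_less_iff:
  "x \<in> lists_below k e \<Longrightarrow> y \<in> lists_below k e \<Longrightarrow>
    revlex_rank k e x < revlex_rank k e y \<longleftrightarrow> rev x < rev y"
  unfolding revlex_rank_def by (rule key_rank_less_iff[OF finite_lists_below])

lemma revlex_unrank:
  shows "\<And>m. m \<in> {1..card (lists_below k e)} \<Longrightarrow> revlex_unrank k e m \<in> lists_below k e"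
    and "\<And>m. m \<in> {1..card (lists_below k e)} \<Longrightarrow> revlex_rank k e (revlex_unrank k e m) = m"
    and "\<And>x. x \<in> lists_below k e \<Longrightarrow> revlex_unrank k e (revlex_rank k e x) = x"
  using bij_betw_revlex_rank[of k e] unfolding revlex_unrank_def
  by (auto simp: bij_betw_def inv_into_into f_inv_into_f inv_into_f_f)

lemma exists_permutes_extending_bij:
  assumes f: "bij_betw f A B" and "finite A"
  shows "\<exists>p. p permutes A \<union> B \<and> (\<forall>a\<in>A. p a = f a)"
proof -
  have "finite B" using f \<open>finite A\<close> bij_betw_finite by blast
  have "card (B - A) = card (A - B)"
    using bij_betw_same_card[OF f] \<open>finite A\<close> \<open>finite B\<close>
    by (simp add: card_Diff_subset_Int Int_commute)
  then obtain g where g: "bij_betw g (B - A) (A - B)"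
    using finite_same_card_bij[of "B - A" "A - B"] \<open>finite A\<close> \<open>finite B\<close> by auto
  define p where "p a = (if a \<in> A then f a else if a \<in> B then g a else a)" for a
  have f_in: "f a \<in> B" if "a \<in> A" for a using f that by (auto simp: bij_betw_def)
  have g_in: "g b \<in> A - B" if "b \<in> B - A" for b using g that by (auto simp: bij_betw_def)
  have inj: "inj_on p (A \<union> B)"
  proof (rule inj_onI)
    fix a b assume ab: "a \<in> A \<union> B" "b \<in> A \<union> B" "p a = p b"
    consider "a \<in> A" "b \<in> A" | "a \<in> A" "b \<in> B - A" | "a \<in> B - A" "b \<in> A" | "a \<in> B - A" "b \<in> B - A"
      using ab(1,2) by blast
    then show "a = b"
    proof cases
      case 1 then show ?thesis using ab(3) f by (auto simp: p_def bij_betw_def dest: inj_onD)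
    next
      case 2
      then have "p a \<in> B" "p b \<notin> B" using f_in g_in by (auto simp: p_def)
      then show ?thesis using ab(3) by simp
    next
      case 3
      then have "p a \<notin> B" "p b \<in> B" using f_in g_in by (auto simp: p_def)
      then show ?thesis using ab(3) by simp
    next
      case 4 then show ?thesis using ab(3) g by (auto simp: p_def bij_betw_def dest: inj_onD)
    qed
  qed
  have "p ` (A \<union> B) \<subseteq> A \<union> B" using f_in g_in by (auto simp: p_def)
  then have "p ` (A \<union> B) = A \<union> B"
    using endo_inj_surj[OF _ _ inj] \<open>finite A\<close> \<open>finite B\<close> by blast
  then have "p permutes A \<union> B"
    using inj by (intro bij_imp_permutes) (auto simp: bij_betw_def p_def)
  then show ?thesis by (auto simp: p_def)
qed

text \<open>Since Schur functions are symmetric, the enumeration of the alphabet may be changed by a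
  finite permutation; we choose one listing the relevant exponent vectors first, in reverse
  lexicographic order.\<close>

lemma exists_revlex_enumeration:
  assumes enum: "bij_betw enum UNIV {xs. length xs = k}"
  shows "\<exists>\<rho> U. finite U \<and> \<rho> permutes U \<and>
     (\<forall>m\<in>{1..card (lists_below k e)}. enum (\<rho> m) = revlex_unrank k e m) \<and>
     (\<forall>m. m \<notin> {1..card (lists_below k e)} \<longrightarrow> enum (\<rho> m) \<notin> lists_below k e)"
proof -
  define I where "I = {1..card (lists_below k e)}"
  define M where "M = {m. enum m \<in> lists_below k e}"
  have inj: "inj enum" using enum by (simp add: bij_betw_def)
  have below_range: "lists_below k e \<subseteq> range enum"
    using enum unfolding bij_betw_def lists_below_def by auto
  have "bij_betw (inv enum \<circ> revlex_unrank k e) I M"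
  proof (rule bij_betw_trans)
    show "bij_betw (revlex_unrank k e) I (lists_below k e)"
      unfolding I_def revlex_unrank_def by (rule bij_betw_inv_into[OF bij_betw_revlex_rank])
    show "bij_betw (inv enum) (lists_below k e) M"
      unfolding M_def using inj below_range
      by (intro bij_betw_byWitness[where f' = enum]) (auto simp: f_inv_into_f subsetD)
  qed
  then obtain \<rho> where \<rho>: "\<rho> permutes I \<union> M" "\<forall>m\<in>I. \<rho> m = (inv enum \<circ> revlex_unrank k e) m"
    using exists_permutes_extending_bij[of _ I M] unfolding I_def by blast
  have unrank: "enum (\<rho> m) = revlex_unrank k e m" if "m \<in> I" for m
    using \<rho>(2) that revlex_unrank(1) below_range unfolding I_def
    by (simp add: f_inv_into_f subsetD)
  have outside: "enum (\<rho> m) \<notin> lists_below k e" if "m \<notin> I" for m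
  proof (cases "m \<in> M")
    case True
    have "\<rho> ` I = M" using \<open>bij_betw (inv enum \<circ> revlex_unrank k e) I M\<close> \<rho>(2)
      by (simp add: bij_betw_def image_def)
    then have "\<rho> m \<notin> M"
      using True that permutes_inj[OF \<rho>(1)] by (auto dest: injD)
    then show ?thesis unfolding M_def by simp
  next
    case False
    then show ?thesis using that permutes_not_in[OF \<rho>(1)] unfolding M_def by auto
  qed
  have "finite (I \<union> M)"
    using \<open>bij_betw (inv enum \<circ> revlex_unrank k e) I M\<close> bij_betw_finite unfolding I_def by auto
  then show ?thesis using \<rho>(1) unrank outside unfolding I_def by blast
qed

lemma bij_betw_PiE_comp:
  assumes f: "bij_betw f A B"
  shows "bij_betw (\<lambda>x. \<lambda>j\<in>I. f (x j)) (I \<rightarrow>\<^sub>E A) (I \<rightarrow>\<^sub>E B)"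
proof (rule bij_betw_byWitness[where f' = "\<lambda>y. \<lambda>j\<in>I. inv_into A f (y j)"])
  have inv_f: "inv_into A f (f a) = a" if "a \<in> A" for a
    using f that by (simp add: bij_betw_def inv_into_f_f)
  have f_inv: "f (inv_into A f b) = b" if "b \<in> B" for b
    using f that by (simp add: bij_betw_def f_inv_into_f)
  show "\<forall>x\<in>I \<rightarrow>\<^sub>E A. (\<lambda>j\<in>I. inv_into A f ((\<lambda>j\<in>I. f (x j)) j)) = x"
  proof (intro ballI ext)
    fix x j assume x: "x \<in> I \<rightarrow>\<^sub>E A"
    show "(\<lambda>j\<in>I. inv_into A f ((\<lambda>j\<in>I. f (x j)) j)) j = x j"
      by (cases "j \<in> I") (simp_all add: inv_f PiE_mem[OF x] PiE_arb[OF x])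
  qed
  show "\<forall>y\<in>I \<rightarrow>\<^sub>E B. (\<lambda>j\<in>I. f ((\<lambda>j\<in>I. inv_into A f (y j)) j)) = y"
  proof (intro ballI ext)
    fix y j assume y: "y \<in> I \<rightarrow>\<^sub>E B"
    show "(\<lambda>j\<in>I. f ((\<lambda>j\<in>I. inv_into A f (y j)) j)) j = y j"
      by (cases "j \<in> I") (simp_all add: f_inv PiE_mem[OF y] PiE_arb[OF y])
  qed
  show "(\<lambda>x. \<lambda>j\<in>I. f (x j)) ` (I \<rightarrow>\<^sub>E A) \<subseteq> I \<rightarrow>\<^sub>E B"
    using bij_betw_apply[OF f] by (auto simp: PiE_iff)
  show "(\<lambda>y. \<lambda>j\<in>I. inv_into A f (y j)) ` (I \<rightarrow>\<^sub>E B) \<subseteq> I \<rightarrow>\<^sub>E A"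
    using f by (auto simp: PiE_iff bij_betw_def inv_into_into)
qed

lemma compatible_of_weight_eq:
  assumes W_len: "\<And>m. length (W m) = k"
    and W_outside: "\<And>m. m \<notin> {1..card (lists_below k e)} \<Longrightarrow> W m \<notin> lists_below k e"
    and e: "length e = k"
  shows "compatible_of_weight n D k W e = {x \<in> {1..n} \<rightarrow>\<^sub>E {1..card (lists_below k e)}.
    compatible n D x \<and> (\<forall>i<k. (\<Sum>m=1..n. W (x m) ! i) = e ! i)}"
proof -
  have "x j \<in> {1..card (lists_below k e)}"
    if "x \<in> compatible_of_weight n D k W e" "j \<in> {1..n}" for x j
  proof -
    have "W (x j) \<in> lists_below k e"
      by (rule mem_lists_below[of n "\<lambda>j. W (x j)" k e])
        (use that W_len e in \<open>auto simp: compatible_of_weight_def\<close>)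
    then show ?thesis using W_outside by blast
  qed
  then show ?thesis unfolding compatible_of_weight_def by (auto simp: PiE_iff)
qed

lemma compatible_vecs_eq:
  assumes e: "length e = k"
  shows "compatible_vecs D n k e = {v \<in> {1..n} \<rightarrow>\<^sub>E lists_below k e.
    revlex_compatible D n v \<and> (\<forall>i<k. (\<Sum>j=1..n. v j ! i) = e ! i)}"
proof -
  have "v j \<in> lists_below k e" if "v \<in> compatible_vecs D n k e" "j \<in> {1..n}" for v j
    by (rule mem_lists_below[of n v k e]) (use that e in \<open>auto simp: compatible_vecs_def\<close>)
  then show ?thesis unfolding compatible_vecs_def by (auto simp: PiE_iff lists_below_def)
qed

lemma bij_betw_compatible_of_weight_compatible_vecs:
  assumes W_len: "\<And>m. length (W m) = k"
    and W_unrank: "\<And>m. m \<in> {1..card (lists_below k e)} \<Longrightarrow> W m = revlex_unrank k e m"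
    and W_outside: "\<And>m. m \<notin> {1..card (lists_below k e)} \<Longrightarrow> W m \<notin> lists_below k e"
    and e: "length e = k"
  shows "bij_betw (\<lambda>x. \<lambda>j\<in>{1..n}. W (x j))
    (compatible_of_weight n D k W e) (compatible_vecs D n k e)"
proof -
  define N where "N = card (lists_below k e)"
  have "bij_betw W {1..N} (lists_below k e) \<longleftrightarrow> bij_betw (revlex_unrank k e) {1..N} (lists_below k e)"
    unfolding N_def by (rule bij_betw_cong) (simp add: W_unrank)
  then have W_bij: "bij_betw W {1..N} (lists_below k e)"
    unfolding N_def revlex_unrank_def using bij_betw_inv_into[OF bij_betw_revlex_rank] by simp
  have W_less_iff: "rev (W m) < rev (W m') \<longleftrightarrow> m < m'" if "m \<in> {1..N}" "m' \<in> {1..N}" for m m'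
  proof -
    have "W m \<in> lists_below k e" "W m' \<in> lists_below k e"
      using revlex_unrank(1) W_unrank that unfolding N_def by simp_all
    moreover have "revlex_rank k e (W m) = m" "revlex_rank k e (W m') = m'"
      using revlex_unrank(2) W_unrank that unfolding N_def by simp_all
    ultimately show ?thesis using revlex_rank_less_iff by metis
  qed
  have W_eq_iff: "W m = W m' \<longleftrightarrow> m = m'" if "m \<in> {1..N}" "m' \<in> {1..N}" for m m'
    using W_bij that by (auto simp: bij_betw_def dest: inj_onD)
  have dom_weight: "compatible_of_weight n D k W e =
      {x \<in> {1..n} \<rightarrow>\<^sub>E {1..N}. compatible n D x \<and> (\<forall>i<k. (\<Sum>m=1..n. W (x m) ! i) = e ! i)}"
    unfolding N_def by (rule compatible_of_weight_eq[OF W_len W_outside e])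
  have compatible_iff: "revlex_compatible D n (\<lambda>j\<in>{1..n}. W (x j)) \<longleftrightarrow> compatible n D x"
    if x: "x \<in> {1..n} \<rightarrow>\<^sub>E {1..N}" for x
  proof -
    have "(rev (W (x j)) < rev (W (x (Suc j))) \<or> (W (x j) = W (x (Suc j)) \<and> j \<notin> D)) \<longleftrightarrow>
        (x j \<le> x (Suc j) \<and> (j \<in> D \<longrightarrow> x j < x (Suc j)))" if j: "j \<in> {1..n-1}" for j
    proof -
      have "x j \<in> {1..N}" "x (Suc j) \<in> {1..N}" using x j by auto
      then show ?thesis using W_less_iff W_eq_iff by auto
    qed
    then show ?thesis unfolding revlex_compatible_def compatible_def by auto
  qed
  have weight_iff:
    "(revlex_compatible D n (\<lambda>j\<in>{1..n}. W (x j)) \<and>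
      (\<forall>i<k. (\<Sum>j=1..n. (\<lambda>j\<in>{1..n}. W (x j)) j ! i) = e ! i)) \<longleftrightarrow>
     (compatible n D x \<and> (\<forall>i<k. (\<Sum>m=1..n. W (x m) ! i) = e ! i))"
    if "x \<in> {1..n} \<rightarrow>\<^sub>E {1..N}" for x
    using compatible_iff[OF that] by simp
  show ?thesis
    unfolding dom_weight compatible_vecs_eq[OF e]
    by (rule bij_betw_Collect[OF bij_betw_PiE_comp[OF W_bij]]) (rule weight_iff)
qed

theorem card_ssyt_of_weight_eq:
  assumes p: "is_partition n la" and k: "k \<ge> 1" and enum: "bij_betw enum UNIV {xs. length xs = k}"
    and e: "length e = k"
  shows "card (ssyt_of_weight la k enum e) = (\<Sum>S\<in>SYT n la. \<Sum>ps\<in>perm_tuples n (k - 1).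
    inv_qpoch_coeff n k (comaj_vec (syt_des n la S) n k ps) e)"
proof -
  obtain \<rho> U where \<rho>: "finite U" "\<rho> permutes U"
    and unrank: "\<forall>m\<in>{1..card (lists_below k e)}. enum (\<rho> m) = revlex_unrank k e m"
    and outside: "\<forall>m. m \<notin> {1..card (lists_below k e)} \<longrightarrow> enum (\<rho> m) \<notin> lists_below k e"
    using exists_revlex_enumeration[OF enum, of e] by blast
  define W where "W = enum \<circ> \<rho>"
  have W_len: "length (W m) = k" for m unfolding W_def using enum by (auto simp: bij_betw_def)
  have bij: "bij_betw (\<lambda>x. \<lambda>j\<in>{1..n}. W (x j))
      (compatible_of_weight n D k W e) (compatible_vecs D n k e)"
    for D
    by (rule bij_betw_compatible_of_weight_compatible_vecs[OF W_len])
      (use unrank outside e in \<open>auto simp: W_def\<close>)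
  have "card (ssyt_of_weight la k enum e) = card (ssyt_of_weight la k W e)"
    unfolding W_def by (rule card_ssyt_of_weight_permutes[OF \<rho>(2,1) p, symmetric])
  also have "\<dots> = (\<Sum>S\<in>SYT n la. card (compatible_of_weight n (syt_des n la S) k W e))"
    by (rule card_ssyt_of_weight[OF p])
      (use bij bij_betw_finite card_compatible_vecs(1)[OF k] in blast)
  also have "\<dots> = (\<Sum>S\<in>SYT n la. card (compatible_vecs (syt_des n la S) n k e))"
    using bij bij_betw_same_card by (intro sum.cong) blast+
  also have "\<dots> = (\<Sum>S\<in>SYT n la. \<Sum>ps\<in>perm_tuples n (k - 1).
      inv_qpoch_coeff n k (comaj_vec (syt_des n la S) n k ps) e)"
    using card_compatible_vecs(2)[OF k] by simp
  finally show ?thesis .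
qed

lemma sum_lists_below_prod:
  fixes F :: "nat \<Rightarrow> nat \<Rightarrow> int"
  assumes e: "length e = k"
  shows "(\<Sum>a\<in>lists_below k e. \<Prod>i<k. F i (a ! i)) = (\<Prod>i<k. \<Sum>t=0..e ! i. F i t)"
proof -
  define P where "P = (\<Pi>\<^sub>E i\<in>{..<k}. {0..e ! i})"
  have bij: "bij_betw (\<lambda>a. \<lambda>i\<in>{..<k}. a ! i) (lists_below k e) P"
  proof (rule bij_betw_byWitness[where f' = "\<lambda>p. map p [0..<k]"])
    show "\<forall>a\<in>lists_below k e. map (\<lambda>i\<in>{..<k}. a ! i) [0..<k] = a"
      unfolding lists_below_def by (auto intro: nth_equalityI)
    show "\<forall>p\<in>P. (\<lambda>i\<in>{..<k}. map p [0..<k] ! i) = p"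
      unfolding P_def by (auto simp: PiE_def extensional_def fun_eq_iff)
    show "(\<lambda>a. \<lambda>i\<in>{..<k}. a ! i) ` lists_below k e \<subseteq> P"
    proof
      fix p assume "p \<in> (\<lambda>a. \<lambda>i\<in>{..<k}. a ! i) ` lists_below k e"
      then obtain a where "a \<in> lists_below k e" "p = (\<lambda>i\<in>{..<k}. a ! i)" by auto
      then show "p \<in> P"
        unfolding lists_below_def P_def using e
        by (simp only: restrict_PiE_iff) (simp add: list_all2_conv_all_nth)
    qed
    show "(\<lambda>p. map p [0..<k]) ` P \<subseteq> lists_below k e"
      unfolding lists_below_def P_def using e by (auto simp: list_all2_conv_all_nth PiE_def)
  qed
  have "(\<Sum>a\<in>lists_below k e. \<Prod>i<k. F i (a ! i)) = (\<Sum>p\<in>P. \<Prod>i<k. F i (p i))"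
    using sum.reindex_bij_betw[OF bij, of "\<lambda>p. \<Prod>i<k. F i (p i)"] by simp
  also have "\<dots> = (\<Prod>i<k. \<Sum>t=0..e ! i. F i t)"
    unfolding P_def by (rule prod_sum_PiE[symmetric]) auto
  finally show ?thesis .
qed

lemma shifted_sorted_lists_qpoch_convolution:
  "(\<Sum>t=0..d. int (if c \<le> t then card (sorted_lists n (t - c)) else 0) * coeff (qpoch n) (d - t)) =
    (if c = d then 1 else 0)"
proof (cases "c \<le> d")
  case True
  have "(\<Sum>t=0..d. int (if c \<le> t then card (sorted_lists n (t - c)) else 0) * coeff (qpoch n) (d - t)) =
        (\<Sum>t=c..d. int (card (sorted_lists n (t - c))) * coeff (qpoch n) (d - t))"
    by (rule sum.mono_neutral_cong_right) auto
  also have "\<dots> = (\<Sum>s=0..d - c. int (card (sorted_lists n s)) * coeff (qpoch n) (d - c - s))"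
    using True by (intro sum.reindex_bij_witness[where i = "\<lambda>s. s + c" and j = "\<lambda>t. t - c"]) auto
  also have "\<dots> = (if d - c = 0 then 1 else 0)"
    by (rule sorted_lists_qpoch_convolution)
  finally show ?thesis using True by auto
next
  case False
  have "(\<Sum>t=0..d. int (if c \<le> t then card (sorted_lists n (t - c)) else 0) * coeff (qpoch n) (d - t)) = 0"
    using False by (intro sum.neutral) auto
  then show ?thesis using False by simp
qed

lemma mps_mult_inv_qpoch_coeff_qpoch_denom:
  assumes e: "length e = k" and c: "length c = k"
  shows "mps_mult k (\<lambda>a. int (inv_qpoch_coeff n k c a)) (qpoch_denom k n) e =
    (if c = e then 1 else 0)"
proof -
  define F where "F i t = int (if c ! i \<le> t then card (sorted_lists n (t - c ! i)) else 0) *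
      coeff (qpoch n) (e ! i - t)" for i t
  have "mps_mult k (\<lambda>a. int (inv_qpoch_coeff n k c a)) (qpoch_denom k n) e =
      (\<Sum>a\<in>lists_below k e. \<Prod>i<k. F i (a ! i))"
    unfolding mps_mult_def lists_below_def[symmetric]
  proof (rule sum.cong[OF refl])
    fix a assume "a \<in> lists_below k e"
    then have "length a = k" unfolding lists_below_def by simp
    then have "qpoch_denom k n (map2 (-) e a) = (\<Prod>i<k. coeff (qpoch n) (e ! i - a ! i))"
      unfolding qpoch_denom_def using e by (intro prod.cong) auto
    then show "int (inv_qpoch_coeff n k c a) * qpoch_denom k n (map2 (-) e a) = (\<Prod>i<k. F i (a ! i))"
      unfolding inv_qpoch_coeff_def F_def by (simp add: prod.distrib of_nat_prod)
  qed
  also have "\<dots> = (\<Prod>i<k. \<Sum>t=0..e ! i. F i t)" by (rule sum_lists_below_prod[OF e])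
  also have "\<dots> = (\<Prod>i<k. if c ! i = e ! i then 1 else 0)"
    unfolding F_def shifted_sorted_lists_qpoch_convolution ..
  also have "\<dots> = (if c = e then 1 else 0)"
  proof (cases "c = e")
    case False
    then obtain i where "i < k" "c ! i \<noteq> e ! i" using e c nth_equalityI by metis
    then have "(\<Prod>i<k. if c ! i = e ! i then 1 else 0) = (0::int)"
      by (intro prod_zero) auto
    then show ?thesis using False by simp
  qed simp
  finally show ?thesis .
qed

lemma mps_mult_sum_left: "mps_mult k (\<lambda>a. \<Sum>x\<in>X. f x a) g e = (\<Sum>x\<in>X. mps_mult k (f x) g e)"
  unfolding mps_mult_def by (simp add: sum_distrib_right sum.swap[of _ X])

lemma schur_at_eq_card: "schur_at la k enum e = int (card (ssyt_of_weight la k enum e))"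
  unfolding schur_at_def ssyt_of_weight_def ..

theorem theorem2:
  fixes n k :: nat and la :: "nat list" and enum :: "nat \<Rightarrow> nat list" and e :: "nat list"
  assumes "n \<ge> 1" and "k \<ge> 1" and "is_partition n la"
    and "bij_betw enum UNIV {xs. length xs = k}"
    and "length e = k"
  shows "mps_mult k (schur_at la k enum) (qpoch_denom k n) e = numer la k n e"
proof -
  define X where "X = SYT n la \<times> perm_tuples n (k - 1)"
  define cv where "cv x = comaj_vec (syt_des n la (fst x)) n k (snd x)" for x
  have schur: "schur_at la k enum a = (\<Sum>x\<in>X. int (inv_qpoch_coeff n k (cv x) a))"
    if "length a = k" for a
    unfolding schur_at_eq_card card_ssyt_of_weight_eq[OF assms(3,2,4) that]
    by (simp add: X_def cv_def sum.cartesian_product of_nat_sum case_prod_beta)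
  have "mps_mult k (schur_at la k enum) (qpoch_denom k n) e =
      mps_mult k (\<lambda>a. \<Sum>x\<in>X. int (inv_qpoch_coeff n k (cv x) a)) (qpoch_denom k n) e"
    unfolding mps_mult_def using schur by (intro sum.cong) auto
  also have "\<dots> = (\<Sum>x\<in>X. if cv x = e then 1 else 0)"
    unfolding mps_mult_sum_left
    using mps_mult_inv_qpoch_coeff_qpoch_denom[OF assms(5)] by (simp add: cv_def length_comaj_vec)
  also have "\<dots> = int (card {x \<in> X. cv x = e})"
    using finite_SYT finite_perm_tuples by (simp add: X_def sum.If_cases Int_def)
  also have "{x \<in> X. cv x = e} = {(T, ps). T \<in> SYT n la \<and> ps \<in> perm_tuples n (k - 1)
      \<and> comaj_vec (syt_des n la T) n k ps = e}"
    unfolding X_def cv_def by auto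
  finally show ?thesis unfolding numer_def .
qed

end
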